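(* Let $X=\mathbb L_{\geq0}$ or $X=\mathbb L$. Then $\operatorname{Homeo}_{cpt}(X)$, equipped with the compact-open topology (as maps of $X$), is countably tight.
   Context: The Closed Long Ray $\mathbb L_{\geq0}$ is $\omega_1\times[0,1)$ with the order topology of the lexicographic order; the Long Line $\mathbb L$ is obtained by gluing a copy of $\mathbb L_{\geq0}$ with reversed order and a copy with the usual order at their least points $(0,0)$. $\operatorname{Homeo}_{cpt}(X)$ is the group of homeomorphisms $h$ of $X$ with compact support $\operatorname{cl}_X\{x\mid h(x)\neq x\}$. A space is countably tight if whenever $p\in\operatorname{cl}A$ there is a countable $C\subseteq A$ with $p\in\operatorname{cl}C$. *)

theory Defs
  imports "HOL-Analysis.Analysis"
begin

text \<open>A well-ordered type is (order-isomorphic to) omega_1 iff it is uncountable and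
  every proper initial segment is countable.\<close>
definition omega1_type :: "'w::wellorder itself \<Rightarrow> bool" where
  "omega1_type _ \<longleftrightarrow> uncountable (UNIV :: 'w set) \<and> (\<forall>x::'w. countable {..<x})"

text \<open>Order topology on a carrier S with strict order lt: generated by the open rays
  (S itself is added so that the topspace is S).\<close>
definition order_topology_on :: "'a set \<Rightarrow> ('a \<Rightarrow> 'a \<Rightarrow> bool) \<Rightarrow> 'a topology" where
  "order_topology_on S lt = topology_generated_by
     (insert S ({{x\<in>S. lt x a} | a. a \<in> S} \<union> {{x\<in>S. lt a x} | a. a \<in> S}))"

text \<open>Closed long ray: omega_1 \<times> [0,1) with the lexicographic order.\<close>
definition long_ray_carrier :: "('w::wellorder \<times> real) set" where
  "long_ray_carrier = UNIV \<times> {0..<1}"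

definition lex_less :: "('w::wellorder \<times> real) \<Rightarrow> ('w \<times> real) \<Rightarrow> bool" where
  "lex_less p q \<longleftrightarrow> fst p < fst q \<or> (fst p = fst q \<and> snd p < snd q)"

definition long_ray :: "('w::wellorder \<times> real) topology" where
  "long_ray = order_topology_on long_ray_carrier lex_less"

text \<open>Long line: a reversed copy (tag False) and a usual copy (tag True) of the long
  ray, glued at their least points (least element of 'w, 0); the glued point is
  represented by (True, least, 0).\<close>
definition long_line_carrier :: "(bool \<times> 'w::wellorder \<times> real) set" where
  "long_line_carrier = {(b, p). p \<in> long_ray_carrier \<and>
       \<not> (b = False \<and> p = ((LEAST w. True), 0))}"

definition long_line_less :: "(bool \<times> 'w::wellorder \<times> real) \<Rightarrow> (bool \<times> 'w \<times> real) \<Rightarrow> bool" where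
  "long_line_less x y \<longleftrightarrow>
     (case (x, y) of
        ((False, p), (False, q)) \<Rightarrow> lex_less q p
      | ((False, p), (True, q)) \<Rightarrow> True
      | ((True, p), (False, q)) \<Rightarrow> False
      | ((True, p), (True, q)) \<Rightarrow> lex_less p q)"

definition long_line :: "(bool \<times> 'w::wellorder \<times> real) topology" where
  "long_line = order_topology_on long_line_carrier long_line_less"

text \<open>Compactly supported homeomorphisms of X (normalised to be the identity off
  the carrier of X, so that they are determined by their action on X).\<close>
definition homeo_cpt :: "'a topology \<Rightarrow> ('a \<Rightarrow> 'a) set" where
  "homeo_cpt X = {h. homeomorphic_map X X h \<and> (\<forall>x. x \<notin> topspace X \<longrightarrow> h x = x) \<and>
      compactin X (X closure_of {x \<in> topspace X. h x \<noteq> x})}"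

definition compact_open_on :: "('a \<Rightarrow> 'a) set \<Rightarrow> 'a topology \<Rightarrow> ('a \<Rightarrow> 'a) topology" where
  "compact_open_on H X = topology_generated_by
     (insert H {{f \<in> H. f ` K \<subseteq> U} | K U. compactin X K \<and> openin X U})"

definition countably_tight :: "'a topology \<Rightarrow> bool" where
  "countably_tight T \<longleftrightarrow> (\<forall>A p. A \<subseteq> topspace T \<and> p \<in> T closure_of A \<longrightarrow>
      (\<exists>C. C \<subseteq> A \<and> countable C \<and> p \<in> T closure_of C))"

end

theory Submission
  imports Defs
begin

lemma generate_topology_on_subset_Union: "generate_topology_on B W \<Longrightarrow> W \<subseteq> \<Union>B"
  by (induction rule: generate_topology_on.induct) auto

lemma generate_topology_on_imp_finite_Inter:
  assumes "generate_topology_on B W" "p \<in> W"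
  obtains F where "finite F" "F \<subseteq> B" "p \<in> \<Inter>F" "\<Inter>F \<subseteq> W"
proof -
  have "(arbitrary union_of finite' intersection_of (\<lambda>x. x \<in> B)) W"
    using assms(1) by (simp add: generate_topology_on_eq)
  then obtain \<U> where \<U>: "\<U> \<subseteq> Collect (finite' intersection_of (\<lambda>x. x \<in> B))" "\<Union>\<U> = W"
    unfolding union_of_def by auto
  then obtain T where T: "T \<in> \<U>" "p \<in> T"
    using assms(2) by auto
  then have "(finite' intersection_of (\<lambda>x. x \<in> B)) T"
    using \<U>(1) by auto
  then obtain F where "finite F" "F \<subseteq> B" "\<Inter>F = T"
    unfolding intersection_of_def by auto
  then show thesis
    using that T \<U>(2) by blast
qed

lemma generate_topology_on_image:
  assumes "generate_topology_on B W" "inj_on g (\<Union>B)"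
  shows "generate_topology_on ((`) g ` B) (g ` W)"
  using assms
proof (induction rule: generate_topology_on.induct)
  case Empty
  then show ?case
    by (simp add: generate_topology_on.Empty)
next
  case (Int a b)
  have "a \<subseteq> \<Union>B" "b \<subseteq> \<Union>B"
    using Int.hyps generate_topology_on_subset_Union by auto
  then have "g ` (a \<inter> b) = g ` a \<inter> g ` b"
    using Int.prems by (simp add: inj_on_image_Int)
  then show ?case
    using Int by (simp add: generate_topology_on.Int)
next
  case (UN K)
  have "generate_topology_on ((`) g ` B) (\<Union>((`) g ` K))"
    using UN by (intro generate_topology_on.UN) auto
  then show ?case
    by (simp add: image_Union)
next
  case (Basis s)
  then show ?case
    by (simp add: generate_topology_on.Basis)
qed

lemma homeomorphic_map_topology_generated_by:
  assumes inj: "inj_on g (\<Union>B)"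
  shows "homeomorphic_map (topology_generated_by B) (topology_generated_by ((`) g ` B)) g"
proof -
  define g' where "g' = inv_into (\<Union>B) g"
  have UB: "\<Union>((`) g ` B) = g ` \<Union>B"
    by blast
  have g'g: "g' (g x) = x" if "x \<in> \<Union>B" for x
    using inj that by (simp add: g'_def)
  have gg': "g' y \<in> \<Union>B \<and> g (g' y) = y" if "y \<in> g ` \<Union>B" for y
    using that unfolding g'_def by (metis f_inv_into_f inv_into_into)
  have inj': "inj_on g' (\<Union>((`) g ` B))"
    unfolding UB using gg' by (metis inj_on_inverseI)
  have B: "(`) g' ` (`) g ` B = B"
  proof -
    have "g' ` g ` U = U" if "U \<in> B" for U
    proof -
      have "\<And>x. x \<in> U \<Longrightarrow> g' (g x) = x"
        using g'g that by blast
      then show ?thesis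
        by (simp add: image_image)
    qed
    then show ?thesis
      by (simp add: image_image)
  qed
  have X: "g x \<in> topspace (topology_generated_by ((`) g ` B)) \<and> g' (g x) = x"
    if "x \<in> topspace (topology_generated_by B)" for x
    using that g'g by (auto simp: UB)
  have Y: "g' y \<in> topspace (topology_generated_by B) \<and> g (g' y) = y"
    if "y \<in> topspace (topology_generated_by ((`) g ` B))" for y
    using that gg' by (simp add: UB)
  have "open_map (topology_generated_by B) (topology_generated_by ((`) g ` B)) g"
    using generate_topology_on_image[OF _ inj]
    by (simp add: open_map_def openin_topology_generated_by_iff)
  moreover have "open_map (topology_generated_by ((`) g ` B)) (topology_generated_by B) g'"
    using generate_topology_on_image[OF _ inj'] B
    by (simp add: open_map_def openin_topology_generated_by_iff)
  ultimately have "homeomorphic_maps (topology_generated_by B) (topology_generated_by ((`) g ` B)) g g'"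
    unfolding homeomorphic_maps_def
    using open_eq_continuous_inverse_map[OF X Y]
      open_eq_continuous_inverse_map[OF Y X] X Y
    by blast
  then show ?thesis
    using homeomorphic_map_maps by blast
qed

lemma countably_tight_homeomorphic_map:
  assumes hom: "homeomorphic_map X Y f" and tight: "countably_tight X"
  shows "countably_tight Y"
  unfolding countably_tight_def
proof (intro allI impI, elim conjE)
  fix A p
  assume A: "A \<subseteq> topspace Y" and p: "p \<in> Y closure_of A"
  define A' where "A' = {x \<in> topspace X. f x \<in> A}"
  have A': "A' \<subseteq> topspace X" "f ` A' = A"
    using A homeomorphic_imp_surjective_map[OF hom] by (auto simp: A'_def)
  obtain q where q: "q \<in> X closure_of A'" "p = f q"
    using p homeomorphic_map_closure_of[OF hom A'(1)] A'(2) by auto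
  obtain C where C: "C \<subseteq> A'" "countable C" "q \<in> X closure_of C"
    using tight q(1) A'(1) unfolding countably_tight_def by blast
  have "p \<in> Y closure_of (f ` C)"
    using homeomorphic_map_closure_of[OF hom] C(1,3) A'(1) q(2) by auto
  then show "\<exists>C\<subseteq>A. countable C \<and> p \<in> Y closure_of C"
    using C(1,2) A'(2) by blast
qed

definition conjugate :: "('a \<Rightarrow> 'b) \<Rightarrow> ('b \<Rightarrow> 'a) \<Rightarrow> 'b topology \<Rightarrow> ('a \<Rightarrow> 'a) \<Rightarrow> 'b \<Rightarrow> 'b" where
  "conjugate \<phi> \<psi> X h y = (if y \<in> topspace X then \<phi> (h (\<psi> y)) else y)"

lemma homeo_cpt_self_map:
  "h \<in> homeo_cpt Y \<Longrightarrow> x \<in> topspace Y \<Longrightarrow> h x \<in> topspace Y"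
  unfolding homeo_cpt_def using homeomorphic_imp_surjective_map by blast

lemma conjugate_conjugate:
  assumes hm: "homeomorphic_maps Y X \<phi> \<psi>" and h: "h \<in> homeo_cpt Y"
  shows "conjugate \<psi> \<phi> Y (conjugate \<phi> \<psi> X h) = h"
proof
  fix x
  have "\<psi> (\<phi> x) = x" "\<phi> x \<in> topspace X" if "x \<in> topspace Y" for x
    using hm that by (auto simp: homeomorphic_maps_def continuous_map_def)
  then show "conjugate \<psi> \<phi> Y (conjugate \<phi> \<psi> X h) x = h x"
    using h homeo_cpt_self_map[OF h] by (auto simp: conjugate_def homeo_cpt_def)
qed

lemma homeo_cpt_conjugate:
  assumes hm: "homeomorphic_maps Y X \<phi> \<psi>" and h: "h \<in> homeo_cpt Y"
  shows "conjugate \<phi> \<psi> X h \<in> homeo_cpt X"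
proof -
  have \<phi>: "homeomorphic_map Y X \<phi>" and \<psi>: "homeomorphic_map X Y \<psi>"
    using hm homeomorphic_maps_map by blast+
  have \<psi>\<phi>: "\<And>x. x \<in> topspace Y \<Longrightarrow> \<psi> (\<phi> x) = x" and \<phi>\<psi>: "\<And>y. y \<in> topspace X \<Longrightarrow> \<phi> (\<psi> y) = y"
    and \<psi>X: "\<And>y. y \<in> topspace X \<Longrightarrow> \<psi> y \<in> topspace Y"
    using hm by (auto simp: homeomorphic_maps_def continuous_map_def)
  have hY: "homeomorphic_map Y Y h" "compactin Y (Y closure_of {x \<in> topspace Y. h x \<noteq> x})"
    using h by (auto simp: homeo_cpt_def)
  have "homeomorphic_map X X (\<phi> \<circ> h \<circ> \<psi>)"
    using homeomorphic_map_compose[OF homeomorphic_map_compose[OF \<psi> hY(1)] \<phi>]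
    by (simp add: comp_assoc)
  then have hom: "homeomorphic_map X X (conjugate \<phi> \<psi> X h)"
    by (rule homeomorphic_map_eq) (simp add: conjugate_def)
  have "{y \<in> topspace X. conjugate \<phi> \<psi> X h y \<noteq> y} = \<phi> ` {x \<in> topspace Y. h x \<noteq> x}"
  proof (intro equalityI subsetI)
    fix y
    assume "y \<in> {y \<in> topspace X. conjugate \<phi> \<psi> X h y \<noteq> y}"
    then show "y \<in> \<phi> ` {x \<in> topspace Y. h x \<noteq> x}"
      using \<phi>\<psi> \<psi>X by (auto simp: conjugate_def intro!: rev_image_eqI[of "\<psi> y"])
  next
    fix y
    assume "y \<in> \<phi> ` {x \<in> topspace Y. h x \<noteq> x}"
    then obtain x where "x \<in> topspace Y" "h x \<noteq> x" "y = \<phi> x"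
      by auto
    then show "y \<in> {y \<in> topspace X. conjugate \<phi> \<psi> X h y \<noteq> y}"
      using \<psi>\<phi> homeo_cpt_self_map[OF h] homeomorphic_imp_surjective_map[OF \<phi>]
      by (auto simp: conjugate_def) metis
  qed
  then have "X closure_of {y \<in> topspace X. conjugate \<phi> \<psi> X h y \<noteq> y}
      = \<phi> ` (Y closure_of {x \<in> topspace Y. h x \<noteq> x})"
    using homeomorphic_map_closure_of[OF \<phi>] by simp
  then have "compactin X (X closure_of {y \<in> topspace X. conjugate \<phi> \<psi> X h y \<noteq> y})"
    using homeomorphic_map_compactness[OF \<phi> closure_of_subset_topspace] hY(2) by simp
  then show ?thesis
    using hom by (simp add: homeo_cpt_def conjugate_def)
qed

lemma conjugate_image_subset_iff:
  assumes hm: "homeomorphic_maps Y X \<phi> \<psi>" and h: "h \<in> homeo_cpt Y"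
    and "K \<subseteq> topspace Y" "U \<subseteq> topspace Y"
  shows "conjugate \<phi> \<psi> X h ` \<phi> ` K \<subseteq> \<phi> ` U \<longleftrightarrow> h ` K \<subseteq> U"
proof -
  have \<psi>\<phi>: "\<And>x. x \<in> topspace Y \<Longrightarrow> \<psi> (\<phi> x) = x" and \<phi>Y: "\<And>x. x \<in> topspace Y \<Longrightarrow> \<phi> x \<in> topspace X"
    using hm by (auto simp: homeomorphic_maps_def continuous_map_def)
  have "conjugate \<phi> \<psi> X h ` \<phi> ` K = \<phi> ` h ` K"
    using assms(3) \<psi>\<phi> \<phi>Y by (force simp: conjugate_def image_image)
  moreover have "inj_on \<phi> (topspace Y)"
    using \<psi>\<phi> by (rule inj_on_inverseI)
  moreover have "h ` K \<subseteq> topspace Y"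
    using homeo_cpt_self_map[OF h] assms(3) by blast
  ultimately show ?thesis
    using assms(4) by (simp add: inj_on_image_subset_iff)
qed

lemma image_conjugate_subbasic:
  assumes hm: "homeomorphic_maps Y X \<phi> \<psi>" and KU: "K \<subseteq> topspace Y" "U \<subseteq> topspace Y"
  shows "conjugate \<phi> \<psi> X ` {h \<in> homeo_cpt Y. h ` K \<subseteq> U}
       = {g \<in> homeo_cpt X. g ` \<phi> ` K \<subseteq> \<phi> ` U}"
proof (intro equalityI subsetI)
  fix g
  assume "g \<in> conjugate \<phi> \<psi> X ` {h \<in> homeo_cpt Y. h ` K \<subseteq> U}"
  then obtain h where "h \<in> homeo_cpt Y" "h ` K \<subseteq> U" "g = conjugate \<phi> \<psi> X h"
    by blast
  then show "g \<in> {g \<in> homeo_cpt X. g ` \<phi> ` K \<subseteq> \<phi> ` U}"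
    using homeo_cpt_conjugate[OF hm] conjugate_image_subset_iff[OF hm _ KU] by simp
next
  fix g
  assume g: "g \<in> {g \<in> homeo_cpt X. g ` \<phi> ` K \<subseteq> \<phi> ` U}"
  have hm': "homeomorphic_maps X Y \<psi> \<phi>"
    using hm homeomorphic_maps_sym by blast
  define h where "h = conjugate \<psi> \<phi> Y g"
  have h: "h \<in> homeo_cpt Y" "g = conjugate \<phi> \<psi> X h"
    using g homeo_cpt_conjugate[OF hm'] conjugate_conjugate[OF hm'] by (simp_all add: h_def)
  then have "h ` K \<subseteq> U"
    using g conjugate_image_subset_iff[OF hm _ KU] by simp
  then show "g \<in> conjugate \<phi> \<psi> X ` {h \<in> homeo_cpt Y. h ` K \<subseteq> U}"
    using h by blast
qed

lemma homeomorphic_map_compact_open_conjugate: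
  assumes hm: "homeomorphic_maps Y X \<phi> \<psi>"
  shows "homeomorphic_map (compact_open_on (homeo_cpt Y) Y) (compact_open_on (homeo_cpt X) X)
           (conjugate \<phi> \<psi> X)"
proof -
  have \<phi>: "homeomorphic_map Y X \<phi>" and \<psi>: "homeomorphic_map X Y \<psi>"
    using hm homeomorphic_maps_map by blast+
  have \<phi>\<psi>: "\<And>y. y \<in> topspace X \<Longrightarrow> \<phi> (\<psi> y) = y" and \<psi>X: "\<And>y. y \<in> topspace X \<Longrightarrow> \<psi> y \<in> topspace Y"
    using hm by (auto simp: homeomorphic_maps_def continuous_map_def)
  define BY where "BY = {{h \<in> homeo_cpt Y. h ` K \<subseteq> U} | K U. compactin Y K \<and> openin Y U}"
  define BX where "BX = {{g \<in> homeo_cpt X. g ` K \<subseteq> U} | K U. compactin X K \<and> openin X U}"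
  have "conjugate \<phi> \<psi> X ` homeo_cpt Y = homeo_cpt X"
    using image_conjugate_subbasic[OF hm, of "{}" "{}"] by simp
  moreover have "(`) (conjugate \<phi> \<psi> X) ` BY = BX"
  proof (intro equalityI subsetI)
    fix Z
    assume "Z \<in> (`) (conjugate \<phi> \<psi> X) ` BY"
    then obtain K U where KU: "compactin Y K" "openin Y U"
      "Z = conjugate \<phi> \<psi> X ` {h \<in> homeo_cpt Y. h ` K \<subseteq> U}"
      unfolding BY_def by blast
    then have "K \<subseteq> topspace Y" "U \<subseteq> topspace Y"
      using compactin_subset_topspace openin_subset by blast+
    then have "Z = {g \<in> homeo_cpt X. g ` \<phi> ` K \<subseteq> \<phi> ` U}"
      "compactin X (\<phi> ` K)" "openin X (\<phi> ` U)"
      using KU image_conjugate_subbasic[OF hm] homeomorphic_map_compactness[OF \<phi>]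
        homeomorphic_map_openness[OF \<phi>] by auto
    then show "Z \<in> BX"
      unfolding BX_def by blast
  next
    fix Z
    assume "Z \<in> BX"
    then obtain K U where KU: "compactin X K" "openin X U" "Z = {g \<in> homeo_cpt X. g ` K \<subseteq> U}"
      unfolding BX_def by blast
    then have "K \<subseteq> topspace X" "U \<subseteq> topspace X"
      using compactin_subset_topspace openin_subset by blast+
    then have KU': "\<phi> ` \<psi> ` K = K" "\<phi> ` \<psi> ` U = U" "\<psi> ` K \<subseteq> topspace Y" "\<psi> ` U \<subseteq> topspace Y"
      using \<phi>\<psi> \<psi>X by (force simp: image_image)+
    have "compactin Y (\<psi> ` K)" "openin Y (\<psi> ` U)"
      using KU homeomorphic_map_compactness[OF \<psi>] homeomorphic_map_openness[OF \<psi>]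
        \<open>K \<subseteq> topspace X\<close> \<open>U \<subseteq> topspace X\<close> by auto
    then have "{h \<in> homeo_cpt Y. h ` \<psi> ` K \<subseteq> \<psi> ` U} \<in> BY"
      unfolding BY_def by blast
    moreover have "Z = conjugate \<phi> \<psi> X ` {h \<in> homeo_cpt Y. h ` \<psi> ` K \<subseteq> \<psi> ` U}"
      using image_conjugate_subbasic[OF hm KU'(3,4)] unfolding KU(3) KU'(1,2) by simp
    ultimately show "Z \<in> (`) (conjugate \<phi> \<psi> X) ` BY"
      by blast
  qed
  ultimately have image: "(`) (conjugate \<phi> \<psi> X) ` insert (homeo_cpt Y) BY = insert (homeo_cpt X) BX"
    by simp
  have "\<Union>(insert (homeo_cpt Y) BY) = homeo_cpt Y"
    unfolding BY_def by blast
  then have "inj_on (conjugate \<phi> \<psi> X) (\<Union>(insert (homeo_cpt Y) BY))"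
    using conjugate_conjugate[OF hm] by (metis inj_on_inverseI)
  from homeomorphic_map_topology_generated_by[OF this]
  have "homeomorphic_map (topology_generated_by (insert (homeo_cpt Y) BY))
      (topology_generated_by (insert (homeo_cpt X) BX)) (conjugate \<phi> \<psi> X)"
    unfolding image .
  then show ?thesis
    unfolding compact_open_on_def BY_def BX_def .
qed

lemma countably_tight_compact_open_homeomorphic:
  assumes "homeomorphic_map Y X \<phi>" "countably_tight (compact_open_on (homeo_cpt Y) Y)"
  shows "countably_tight (compact_open_on (homeo_cpt X) X)"
proof -
  obtain \<psi> where "homeomorphic_maps Y X \<phi> \<psi>"
    using assms(1) homeomorphic_map_maps by blast
  then show ?thesis
    using assms(2) countably_tight_homeomorphic_map homeomorphic_map_compact_open_conjugate by blast
qed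


lemma compact_Icc_conditionally_complete:
  fixes a b :: "'a::{conditionally_complete_linorder, linorder_topology}"
  shows "compact {a..b}"
proof (rule compactI)
  fix C
  assume C: "\<forall>U\<in>C. open U" "{a..b} \<subseteq> \<Union>C"
  define T where "T = {x \<in> {a..b}. \<exists>D\<subseteq>C. finite D \<and> {a..x} \<subseteq> \<Union>D}"
  have T_extend: "y \<in> T"
    if x: "x \<in> T" and y: "y \<in> {a..b}" and E: "E \<subseteq> C" "finite E" "{x..y} \<subseteq> \<Union>E" for x y E
  proof -
    obtain D where D: "D \<subseteq> C" "finite D" "{a..x} \<subseteq> \<Union>D"
      using x by (auto simp: T_def)
    have "{a..y} \<subseteq> {a..x} \<union> {x..y}"
      by auto
    then have "{a..y} \<subseteq> \<Union>(D \<union> E)"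
      using D(3) E(3) by blast
    moreover have "D \<union> E \<subseteq> C" "finite (D \<union> E)"
      using D E by auto
    ultimately show ?thesis
      using y unfolding T_def by blast
  qed
  show "\<exists>C'\<subseteq>C. finite C' \<and> {a..b} \<subseteq> \<Union>C'"
  proof (cases "a \<le> b")
    case True
    obtain U where "U \<in> C" "a \<in> U"
      using C(2) True by auto
    then have aT: "a \<in> T"
      using True unfolding T_def by (intro CollectI conjI exI[of _ "{U}"]) auto
    have bdd: "bdd_above T"
      unfolding T_def by (rule bdd_aboveI[of _ b]) auto
    define s where "s = Sup T"
    have s_upper: "x \<le> s" if "x \<in> T" for x
      unfolding s_def using that bdd by (rule cSup_upper)
    have "s \<le> b"
      unfolding s_def using aT by (intro cSup_least) (blast, simp add: T_def)
    then have s: "a \<le> s" "s \<le> b"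
      using s_upper[OF aT] by auto
    obtain U where U: "U \<in> C" "s \<in> U" "open U"
      using C s by auto
    have sT: "s \<in> T"
    proof (cases "a < s")
      case True
      then obtain c where c: "c < s" "{c<..s} \<subseteq> U"
        using open_left[OF U(3,2)] by auto
      then obtain t where t: "t \<in> T" "c < t"
        using less_cSup_iff[OF _ bdd, of c] aT unfolding s_def by auto
      have "{t..s} \<subseteq> {c<..s}"
        using t(2) by auto
      then have "{t..s} \<subseteq> \<Union>{U}"
        using c(2) by auto
      then show ?thesis
        using T_extend[OF t(1), of s "{U}"] s U(1) by simp
    qed (use aT s in auto)
    have "s = b"
    proof (rule ccontr)
      assume "s \<noteq> b"
      then have "s < b"
        using s by simp
      then obtain d where d: "s < d" "{s..<d} \<subseteq> U"
        using open_right[OF U(3,2)] by auto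
      define e where "e = min d b"
      have e: "s < e" "e \<le> b"
        using d(1) \<open>s < b\<close> by (auto simp: e_def)
      have "\<exists>y\<in>T. s < y"
      proof (cases "\<exists>z. s < z \<and> z < e")
        case True
        then obtain z where z: "s < z" "z < e"
          by auto
        have "{s..z} \<subseteq> {s..<d}"
          using z by (auto simp: e_def)
        then have "{s..z} \<subseteq> \<Union>{U}"
          using d(2) by auto
        then have "z \<in> T"
          using T_extend[OF sT, of z "{U}"] z e s U(1) by force
        then show ?thesis
          using z(1) by blast
      next
        case False
        have "e \<in> {a..b}"
          using s e by auto
        then obtain V where V: "V \<in> C" "e \<in> V"
          using C(2) by blast
        have "{s..e} \<subseteq> \<Union>{U, V}"
        proof
          fix x
          assume "x \<in> {s..e}"
          then have "x = s \<or> x = e"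
            using False by (auto simp: le_less)
          then show "x \<in> \<Union>{U, V}"
            using U(2) V(2) by auto
        qed
        then have "e \<in> T"
          using T_extend[OF sT, of e "{U, V}"] e s U(1) V(1) by force
        then show ?thesis
          using e(1) by blast
      qed
      then show False
        using s_upper by (auto simp: not_le[symmetric])
    qed
    then show ?thesis
      using sT unfolding T_def by auto
  qed auto
qed


lemma compact_imp_strictly_bounded:
  fixes K :: "'a::{linorder_topology, no_bot, no_top} set"
  assumes "compact K"
  obtains l u where "\<forall>x\<in>K. l < x \<and> x < u"
proof (cases "K = {}")
  case False
  obtain m M where "\<forall>x\<in>K. m \<le> x \<and> x \<le> M"
    using compact_attains_inf[OF assms False] compact_attains_sup[OF assms False] by metis
  moreover obtain l u where "l < m" "M < u"
    using lt_ex gt_ex by blast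
  ultimately show thesis
    using that by (meson less_le_trans le_less_trans)
qed (use that in auto)

definition order_dense_in :: "'a::linorder set \<Rightarrow> 'a \<Rightarrow> 'a \<Rightarrow> bool" where
  "order_dense_in D l u \<longleftrightarrow> (\<forall>x y. l \<le> x \<longrightarrow> x < y \<longrightarrow> y \<le> u \<longrightarrow> (\<exists>d\<in>D. x < d \<and> d < y))"

lemma order_dense_inD:
  "order_dense_in D l u \<Longrightarrow> l \<le> x \<Longrightarrow> x < y \<Longrightarrow> y \<le> u \<Longrightarrow> \<exists>d\<in>D. x < d \<and> d < y"
  unfolding order_dense_in_def by blast

lemma open_contains_Icc_from_dense:
  fixes x :: "'a::linorder_topology"
  assumes "order_dense_in D l u" "open V" "x \<in> V" "l < x" "x < u"
  obtains d1 d2 where "d1 \<in> D" "d2 \<in> D" "d1 < x" "x < d2" "{d1..d2} \<subseteq> V"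
proof -
  obtain c where c: "c < x" "{c<..x} \<subseteq> V"
    using open_left[OF assms(2,3,4)] by blast
  obtain e where e: "x < e" "{x..<e} \<subseteq> V"
    using open_right[OF assms(2,3,5)] by blast
  obtain d1 where d1: "d1 \<in> D" "max c l < d1" "d1 < x"
    using order_dense_inD[OF assms(1), of "max c l" x] c(1) assms(4) less_imp_le[OF assms(5)] by auto
  obtain d2 where d2: "d2 \<in> D" "x < d2" "d2 < min e u"
    using order_dense_inD[OF assms(1), of x "min e u"] e(1) assms(5) less_imp_le[OF assms(4)] by auto
  have "{d1..d2} \<subseteq> {c<..x} \<union> {x..<e}"
    using d1 d2 by auto
  then have "{d1..d2} \<subseteq> V"
    using c(2) e(2) by blast
  then show thesis
    using that d1 d2 by blast
qed

lemma compact_cover_by_dense_boxes: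
  fixes p :: "'a::linorder_topology \<Rightarrow> 'a"
  assumes p: "continuous_on S p" and D: "order_dense_in D l u"
    and K: "compact K" "K \<subseteq> S" "\<forall>x\<in>K. l < x \<and> x < u \<and> l < p x \<and> p x < u"
    and V: "open V" "p ` K \<subseteq> V"
  shows "\<exists>G. finite G \<and> G \<subseteq> D \<times> D \<times> D \<times> D \<and>
    (\<forall>d1 d2 e1 e2. (d1, d2, e1, e2) \<in> G \<longrightarrow> p ` ({d1..d2} \<inter> S) \<subseteq> {e1<..<e2} \<and> {e1<..<e2} \<subseteq> V) \<and>
    (\<forall>x\<in>K. \<exists>d1 d2 e1 e2. (d1, d2, e1, e2) \<in> G \<and> d1 < x \<and> x < d2)"
proof -
  define good where "good = (\<lambda>(d1, d2, e1, e2). p ` ({d1..d2} \<inter> S) \<subseteq> {e1<..<e2} \<and> {e1<..<e2} \<subseteq> V)"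
  define inner :: "'a \<times> 'a \<times> 'a \<times> 'a \<Rightarrow> 'a set" where "inner = (\<lambda>(d1, d2, e1, e2). {d1<..<d2})"
  have "\<forall>x\<in>K. \<exists>q. q \<in> D \<times> D \<times> D \<times> D \<and> good q \<and> x \<in> inner q"
  proof
    fix x
    assume x: "x \<in> K"
    have px: "p x \<in> V" "l < p x" "p x < u"
      using V(2) K(3) x by blast+
    obtain e1 e2 where e: "e1 \<in> D" "e2 \<in> D" "e1 < p x" "p x < e2" "{e1..e2} \<subseteq> V"
      by (rule open_contains_Icc_from_dense[OF D V(1) px])
    have "\<exists>W. open W \<and> W \<inter> S = p -` {e1<..<e2} \<inter> S"
      using p open_greaterThanLessThan unfolding continuous_on_open_invariant by blast
    then obtain W where W: "open W" "W \<inter> S = p -` {e1<..<e2} \<inter> S"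
      by blast
    have "x \<in> W \<inter> S"
      using e(3,4) x K(2) W(2) by auto
    then have x': "x \<in> W" "l < x" "x < u"
      using K(3) x by auto
    obtain d1 d2 where d: "d1 \<in> D" "d2 \<in> D" "d1 < x" "x < d2" "{d1..d2} \<subseteq> W"
      by (rule open_contains_Icc_from_dense[OF D W(1) x'])
    have "p ` ({d1..d2} \<inter> S) \<subseteq> p ` (W \<inter> S)"
      using d(5) by auto
    also have "\<dots> \<subseteq> {e1<..<e2}"
      unfolding W(2) by auto
    finally have "p ` ({d1..d2} \<inter> S) \<subseteq> {e1<..<e2}" .
    moreover have "{e1<..<e2} \<subseteq> V"
      using e(5) by (auto simp: subset_eq less_imp_le)
    ultimately show "\<exists>q. q \<in> D \<times> D \<times> D \<times> D \<and> good q \<and> x \<in> inner q"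
      using d e by (intro exI[of _ "(d1, d2, e1, e2)"]) (simp add: good_def inner_def)
  qed
  from bchoice[OF this]
  obtain Q where Q: "\<forall>x\<in>K. Q x \<in> D \<times> D \<times> D \<times> D \<and> good (Q x) \<and> x \<in> inner (Q x)"
    by (elim exE) (rule that)
  have "open (inner q)" for q
    by (cases q) (simp add: inner_def)
  moreover have "K \<subseteq> (\<Union>x\<in>K. inner (Q x))"
    using Q by auto
  ultimately obtain K' where K': "K' \<subseteq> K" "finite K'" "K \<subseteq> (\<Union>x\<in>K'. inner (Q x))"
    by (rule compactE_image[OF K(1)])
  have "\<forall>q\<in>Q ` K'. good q"
    using K'(1) Q by blast
  then have maps: "p ` ({d1..d2} \<inter> S) \<subseteq> {e1<..<e2} \<and> {e1<..<e2} \<subseteq> V"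
    if "(d1, d2, e1, e2) \<in> Q ` K'" for d1 d2 e1 e2
    using that unfolding good_def by fastforce
  have covers: "\<exists>d1 d2 e1 e2. (d1, d2, e1, e2) \<in> Q ` K' \<and> d1 < x \<and> x < d2" if x: "x \<in> K" for x
  proof -
    obtain y where "y \<in> K'" "x \<in> inner (Q y)"
      using K'(3) x by blast
    then show ?thesis
      unfolding inner_def by (cases "Q y") force
  qed
  show ?thesis
  proof (intro exI[of _ "Q ` K'"] conjI allI impI ballI)
    show "finite (Q ` K')"
      using K'(2) by simp
    show "Q ` K' \<subseteq> D \<times> D \<times> D \<times> D"
      using K'(1) Q by blast
  next
    fix d1 d2 e1 e2
    assume "(d1, d2, e1, e2) \<in> Q ` K'"
    then show "p ` ({d1..d2} \<inter> S) \<subseteq> {e1<..<e2}" "{e1<..<e2} \<subseteq> V"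
      using maps by simp_all
  next
    fix x
    assume "x \<in> K"
    then show "\<exists>d1 d2 e1 e2. (d1, d2, e1, e2) \<in> Q ` K' \<and> d1 < x \<and> x < d2"
      by (rule covers)
  qed
qed

lemma compact_left_margin:
  fixes c :: "'a::{linorder_topology, no_bot}"
  assumes "compact K" "open V" "c \<in> K \<Longrightarrow> c \<in> V"
  obtains \<gamma> where "\<gamma> < c" "K \<inter> {\<gamma><..c} = {} \<or> {\<gamma><..c} \<subseteq> V"
proof (cases "c \<in> K")
  case True
  obtain y where "y < c"
    using lt_ex by blast
  then show thesis
    using open_left[OF assms(2) assms(3)[OF True]] that by blast
next
  case False
  show thesis
  proof (cases "K \<inter> {..c} = {}")
    case True
    obtain \<gamma> where "\<gamma> < c"
      using lt_ex by blast
    moreover have "K \<inter> {\<gamma><..c} = {}"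
      using True by auto
    ultimately show thesis
      using that by blast
  next
    case nonempty: False
    have "compact (K \<inter> {..c})"
      using assms(1) by (simp add: compact_Int_closed)
    then obtain m where m: "m \<in> K \<inter> {..c}" "\<forall>y\<in>K \<inter> {..c}. y \<le> m"
      using compact_attains_sup[OF _ nonempty] by blast
    have "m \<noteq> c"
      using m(1) False by auto
    then have "m < c"
      using m(1) by auto
    moreover have "K \<inter> {m<..c} = {}"
      using m(2) by (auto simp: not_le[symmetric])
    ultimately show thesis
      using that by blast
  qed
qed

lemma compact_right_margin:
  fixes c :: "'a::{linorder_topology, no_top}"
  assumes "compact K" "open V" "c \<in> K \<Longrightarrow> c \<in> V"
  obtains \<delta> where "c < \<delta>" "K \<inter> {c..<\<delta>} = {} \<or> {c..<\<delta>} \<subseteq> V"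
proof (cases "c \<in> K")
  case True
  obtain y where "c < y"
    using gt_ex by blast
  then show thesis
    using open_right[OF assms(2) assms(3)[OF True]] that by blast
next
  case False
  show thesis
  proof (cases "K \<inter> {c..} = {}")
    case True
    obtain \<delta> where "c < \<delta>"
      using gt_ex by blast
    moreover have "K \<inter> {c..<\<delta>} = {}"
      using True by auto
    ultimately show thesis
      using that by blast
  next
    case nonempty: False
    have "compact (K \<inter> {c..})"
      using assms(1) by (simp add: compact_Int_closed)
    then obtain m where m: "m \<in> K \<inter> {c..}" "\<forall>y\<in>K \<inter> {c..}. m \<le> y"
      using compact_attains_inf[OF _ nonempty] by blast
    have "m \<noteq> c"
      using m(1) False by auto
    then have "c < m"
      using m(1) by auto
    moreover have "K \<inter> {c..<m} = {}"
      using m(2) by (auto simp: not_le[symmetric])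
    ultimately show thesis
      using that by blast
  qed
qed


locale long_interval =
  fixes S :: "'a::{linear_continuum_topology, no_bot, no_top} set"
  assumes closed_S: "closed S"
    and Icc_subset_S: "\<And>x z. x \<in> S \<Longrightarrow> z \<in> S \<Longrightarrow> {x..z} \<subseteq> S"
    and S_nonempty: "S \<noteq> {}"
    and S_no_max: "\<And>x. x \<in> S \<Longrightarrow> \<exists>y\<in>S. x < y"
    and countable_bounded: "\<And>T. countable T \<Longrightarrow> T \<subseteq> S \<Longrightarrow> \<exists>l\<in>S. \<exists>u\<in>S. \<forall>t\<in>T. l \<le> t \<and> t \<le> u"
    and separable_Icc: "\<And>a b :: 'a. \<exists>D. countable D \<and> order_dense_in D a b"
begin

abbreviation H :: "('a \<Rightarrow> 'a) set" where
  "H \<equiv> homeo_cpt (top_of_set S)"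

abbreviation CO :: "('a \<Rightarrow> 'a) topology" where
  "CO \<equiv> compact_open_on H (top_of_set S)"

lemma H_D:
  assumes "f \<in> H"
  shows "continuous_on S f" "f ` S = S" "inj_on f S" "\<And>x. x \<notin> S \<Longrightarrow> f x = x"
    "compact (closure {x \<in> S. f x \<noteq> x})"
proof -
  have h: "homeomorphic_map (top_of_set S) (top_of_set S) f"
    and c: "compactin (top_of_set S) (top_of_set S closure_of {x \<in> S. f x \<noteq> x})"
    using assms by (auto simp: homeo_cpt_def)
  then have "continuous_map (top_of_set S) (top_of_set S) f"
    using homeomorphic_imp_continuous_map by blast
  then show "continuous_on S f"
    by simp
  show "f ` S = S" "inj_on f S"
    using h by (auto simp: homeomorphic_eq_everything_map)
  show "\<And>x. x \<notin> S \<Longrightarrow> f x = x"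
    using assms by (simp add: homeo_cpt_def)
  have "closure {x \<in> S. f x \<noteq> x} \<subseteq> S"
    using closed_S by (simp add: closure_minimal)
  then have "top_of_set S closure_of {x \<in> S. f x \<noteq> x} = closure {x \<in> S. f x \<noteq> x}"
    by (simp add: closure_of_subtopology Int_absorb1)
  then show "compact (closure {x \<in> S. f x \<noteq> x})"
    using c by (simp add: compactin_subtopology)
qed

lemma H_support_bounded:
  assumes "f \<in> H"
  obtains a b where "a \<in> S" "b \<in> S" "\<And>x. f x \<noteq> x \<Longrightarrow> a \<le> x \<and> x \<le> b"
proof -
  define K where "K = closure {x \<in> S. f x \<noteq> x}"
  have "compact K"
    using H_D(5)[OF assms] by (simp add: K_def)
  have "K \<subseteq> S"
    unfolding K_def using closed_S by (rule closure_minimal[rotated]) auto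
  have moved: "x \<in> K" if "f x \<noteq> x" for x
  proof -
    have "x \<in> S"
      using H_D(4)[OF assms] that by meson
    then have "x \<in> {x \<in> S. f x \<noteq> x}"
      using that by simp
    then show ?thesis
      unfolding K_def by (rule subsetD[OF closure_subset])
  qed
  show thesis
  proof (cases "K = {}")
    case True
    obtain s where "s \<in> S"
      using S_nonempty by blast
    moreover have "s \<le> x \<and> x \<le> s" if "f x \<noteq> x" for x
      using moved[OF that] True by blast
    ultimately show thesis
      using that by metis
  next
    case False
    obtain a where "a \<in> K" "\<forall>x\<in>K. a \<le> x"
      using compact_attains_inf[OF \<open>compact K\<close> False] by blast
    moreover obtain b where "b \<in> K" "\<forall>x\<in>K. x \<le> b"
      using compact_attains_sup[OF \<open>compact K\<close> False] by blast
    moreover have "a \<le> x \<and> x \<le> b" if "f x \<noteq> x" for x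
      using calculation moved[OF that] by blast
    ultimately show thesis
      using that \<open>K \<subseteq> S\<close> by (metis subsetD)
  qed
qed

lemma H_strict_mono:
  assumes f: "f \<in> H" and "x \<in> S" "y \<in> S" "x < y"
  shows "f x < f y"
proof -
  obtain a b where "a \<in> S" "b \<in> S" and support: "\<And>z. f z \<noteq> z \<Longrightarrow> a \<le> z \<and> z \<le> b"
    using H_support_bounded[OF f] by metis
  have fixed: "f z = z" if "b < z" for z
    using support[of z] that by (meson leD)
  have "max b y \<in> S"
    using \<open>b \<in> S\<close> assms(3) by (simp add: max_def)
  then obtain v where v: "v \<in> S" "max b y < v"
    using S_no_max by meson
  obtain w where w: "w \<in> S" "v < w"
    using S_no_max[OF v(1)] by meson
  have mono3: "(f r < f s \<and> f s < f t) \<or> (f t < f s \<and> f s < f r)"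
    if "r \<in> S" "t \<in> S" "r < s" "s < t" for r s t
  proof -
    have "{r..t} \<subseteq> S"
      using Icc_subset_S that(1,2) .
    then have "continuous_on {r..t} f" "inj_on f {r..t}"
      using continuous_on_subset[OF H_D(1)[OF f]] inj_on_subset[OF H_D(3)[OF f]] by auto
    then show ?thesis
      by (rule continuous_inj_imp_mono[OF that(3,4)])
  qed
  have "f v = v" "f w = w"
    using fixed v(2) w(2) by auto
  then have "f y < f v"
    using mono3[OF assms(3) w(1), of v] v(2) w(2) by auto
  then show ?thesis
    using mono3[OF assms(2) v(1), of y] assms(4) v(2) by auto
qed

lemma H_fixes_if_fixes_below:
  assumes f: "f \<in> H" and "a \<in> S" and below: "\<And>y. y \<in> S \<Longrightarrow> y < a \<Longrightarrow> f y = y"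
  shows "f a = a"
proof (rule ccontr)
  assume moved: "f a \<noteq> a"
  have "f a \<in> S"
    using H_D(2)[OF f] assms(2) by auto
  obtain z where z: "z \<in> S" "f z = a"
    using H_D(2)[OF f] assms(2) by (metis imageE)
  show False
  proof (cases "f a < a")
    case True
    then have "f (f a) = f a"
      using below \<open>f a \<in> S\<close> by simp
    then show False
      using moved inj_onD[OF H_D(3)[OF f] _ \<open>f a \<in> S\<close> assms(2)] by simp
  next
    case False
    then have "a < f a"
      using moved by simp
    moreover have "a < z"
    proof (rule ccontr)
      assume "\<not> a < z"
      then have "z < a \<or> z = a"
        by auto
      then show False
        using below[OF z(1)] z(2) moved by auto
    qed
    ultimately show False
      using H_strict_mono[OF f assms(2) z(1)] z(2) by simp
  qed
qed

lemma H_support_strictly_bounded: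
  assumes f: "f \<in> H"
  obtains a b where "a \<in> S" "b \<in> S" "\<And>x. f x \<noteq> x \<Longrightarrow> a < x \<and> x < b"
proof -
  obtain a b where ab: "a \<in> S" "b \<in> S" "\<And>x. f x \<noteq> x \<Longrightarrow> a \<le> x \<and> x \<le> b"
    using H_support_bounded[OF f] by metis
  obtain b' where "b' \<in> S" "b < b'"
    using S_no_max[OF ab(2)] by meson
  have "f a = a"
    using H_fixes_if_fixes_below[OF f ab(1)] ab(3) by (meson leD)
  then have "a < x \<and> x < b'" if "f x \<noteq> x" for x
    using ab(3)[OF that] that \<open>b < b'\<close> by (auto simp: le_less)
  then show thesis
    using that[OF ab(1) \<open>b' \<in> S\<close>] by meson
qed

lemma H_moved_image_moved:
  assumes f: "f \<in> H" and "f x \<noteq> x"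
  shows "f (f x) \<noteq> f x"
proof
  assume "f (f x) = f x"
  moreover have "x \<in> S"
    using H_D(4)[OF f] assms(2) by meson
  moreover have "f x \<in> S"
    using H_D(2)[OF f] \<open>x \<in> S\<close> by auto
  ultimately show False
    using inj_onD[OF H_D(3)[OF f]] assms(2) by meson
qed

definition approximates :: "('a \<Rightarrow> 'a) \<Rightarrow> ('a \<Rightarrow> 'a) set \<Rightarrow> 'a set \<Rightarrow> bool" where
  "approximates p C L \<longleftrightarrow> (\<forall>P. finite P \<and>
      (\<forall>K V. (K, V) \<in> P \<longrightarrow> compact K \<and> K \<subseteq> S \<inter> L \<and> open V \<and> p ` K \<subseteq> V) \<longrightarrow>
      (\<exists>f\<in>C. \<forall>K V. (K, V) \<in> P \<longrightarrow> f ` K \<subseteq> V))"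

lemma approximatesI:
  assumes "\<And>P. finite P \<Longrightarrow>
      (\<And>K V. (K, V) \<in> P \<Longrightarrow> compact K \<and> K \<subseteq> S \<inter> L \<and> open V \<and> p ` K \<subseteq> V) \<Longrightarrow>
      \<exists>f\<in>C. \<forall>K V. (K, V) \<in> P \<longrightarrow> f ` K \<subseteq> V"
  shows "approximates p C L"
  using assms unfolding approximates_def by meson

lemma approximatesE:
  assumes "approximates p C L" "finite P"
    "\<And>K V. (K, V) \<in> P \<Longrightarrow> compact K \<and> K \<subseteq> S \<inter> L \<and> open V \<and> p ` K \<subseteq> V"
  obtains f where "f \<in> C" "\<And>K V. (K, V) \<in> P \<Longrightarrow> f ` K \<subseteq> V"
  using assms unfolding approximates_def by meson

lemma topspace_CO: "topspace CO = H"
  unfolding compact_open_on_def by auto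

lemma H_image_subset_Int:
  assumes "K \<subseteq> S"
  shows "{f \<in> H. f ` K \<subseteq> S \<inter> V} = {f \<in> H. f ` K \<subseteq> V}"
proof -
  have "f ` K \<subseteq> S" if "f \<in> H" for f
    using image_mono[OF assms, of f] H_D(2)[OF that] by simp
  then show ?thesis
    by auto
qed

lemma CO_subbasisE:
  assumes "X \<in> insert H {{f \<in> H. f ` K \<subseteq> U} | K U. compactin (top_of_set S) K \<and> openin (top_of_set S) U}"
    and "X \<noteq> H"
  obtains K V where "compact K" "K \<subseteq> S" "open V" "X = {f \<in> H. f ` K \<subseteq> V}"
proof -
  obtain K U where KU: "compactin (top_of_set S) K" "openin (top_of_set S) U" "X = {f \<in> H. f ` K \<subseteq> U}"
    using assms by auto
  moreover obtain V where "open V" "U = S \<inter> V"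
    using KU(2) by (auto simp: openin_open)
  ultimately show thesis
    using that H_image_subset_Int by (auto simp: compactin_subtopology)
qed

lemma openin_CO_subbasic:
  assumes "compact K" "K \<subseteq> S" "open V"
  shows "openin CO {f \<in> H. f ` K \<subseteq> V}"
proof -
  have "compactin (top_of_set S) K" "openin (top_of_set S) (S \<inter> V)"
    using assms by (simp_all add: compactin_subtopology openin_open_Int)
  then have "{f \<in> H. f ` K \<subseteq> S \<inter> V}
      \<in> insert H {{f \<in> H. f ` K \<subseteq> U} | K U. compactin (top_of_set S) K \<and> openin (top_of_set S) U}"
    by blast
  then show ?thesis
    unfolding compact_open_on_def H_image_subset_Int[OF assms(2)] by (rule topology_generated_by_Basis)
qed

lemma openin_CO_finite_Inter:
  assumes "finite P" "\<And>K V. (K, V) \<in> P \<Longrightarrow> compact K \<and> K \<subseteq> S \<and> open V"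
  shows "openin CO {f \<in> H. \<forall>K V. (K, V) \<in> P \<longrightarrow> f ` K \<subseteq> V}"
  using assms
proof (induction P rule: finite_induct)
  case empty
  show ?case
    using openin_topspace[of CO] by (simp add: topspace_CO)
next
  case (insert KV P)
  obtain K V where KV: "KV = (K, V)"
    by fastforce
  have "{f \<in> H. \<forall>K' V'. (K', V') \<in> insert KV P \<longrightarrow> f ` K' \<subseteq> V'}
      = {f \<in> H. f ` K \<subseteq> V} \<inter> {f \<in> H. \<forall>K V. (K, V) \<in> P \<longrightarrow> f ` K \<subseteq> V}"
    unfolding KV by blast
  moreover have "openin CO {f \<in> H. f ` K \<subseteq> V}"
    using insert.prems[of K V] by (simp add: KV openin_CO_subbasic)
  moreover have "openin CO {f \<in> H. \<forall>K V. (K, V) \<in> P \<longrightarrow> f ` K \<subseteq> V}"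
    by (rule insert.IH) (use insert.prems in blast)
  ultimately show ?case
    by (simp add: openin_Int)
qed

lemma closure_imp_approximates:
  assumes "p \<in> CO closure_of A"
  shows "approximates p A UNIV"
proof (rule approximatesI)
  fix P
  assume P: "finite P" "\<And>K V. (K, V) \<in> P \<Longrightarrow> compact K \<and> K \<subseteq> S \<inter> UNIV \<and> open V \<and> p ` K \<subseteq> V"
  define W where "W = {f \<in> H. \<forall>K V. (K, V) \<in> P \<longrightarrow> f ` K \<subseteq> V}"
  have "openin CO W"
    unfolding W_def using P by (intro openin_CO_finite_Inter) auto
  moreover have "p \<in> W"
    using assms P(2) in_closure_of[of p CO A] by (auto simp: W_def topspace_CO)
  ultimately obtain f where "f \<in> A" "f \<in> W"
    using assms in_closure_of[of p CO A] by meson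
  then show "\<exists>f\<in>A. \<forall>K V. (K, V) \<in> P \<longrightarrow> f ` K \<subseteq> V"
    unfolding W_def by auto
qed

lemma approximates_imp_closure:
  assumes p: "p \<in> H" and C: "C \<subseteq> H" and approx: "approximates p C UNIV"
  shows "p \<in> CO closure_of C"
  unfolding in_closure_of
proof (intro conjI allI impI)
  show "p \<in> topspace CO"
    using p by (simp add: topspace_CO)
  fix W
  assume "p \<in> W \<and> openin CO W"
  then obtain F where F: "finite F" "p \<in> \<Inter>F" "\<Inter>F \<subseteq> W"
    and F_subbasic: "F \<subseteq> insert H {{f \<in> H. f ` K \<subseteq> U} | K U. compactin (top_of_set S) K \<and> openin (top_of_set S) U}"
    unfolding compact_open_on_def openin_topology_generated_by_iff
    by (meson generate_topology_on_imp_finite_Inter)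
  define good where "good X KV \<longleftrightarrow> compact (fst KV) \<and> fst KV \<subseteq> S \<and> open (snd KV)
      \<and> X = {f \<in> H. f ` fst KV \<subseteq> snd KV}" for X KV
  define r where "r X = (SOME KV. good X KV)" for X
  have r: "compact (fst (r X))" "fst (r X) \<subseteq> S" "open (snd (r X))" "X = {f \<in> H. f ` fst (r X) \<subseteq> snd (r X)}"
    if X: "X \<in> F - {H}" for X
  proof -
    obtain K V where "compact K" "K \<subseteq> S" "open V" "X = {f \<in> H. f ` K \<subseteq> V}"
      by (rule CO_subbasisE[OF subsetD[OF F_subbasic DiffD1[OF X]]]) (use X in auto)
    then have "good X (K, V)"
      unfolding good_def by simp
    then have "good X (r X)"
      unfolding r_def by (rule someI)
    then show "compact (fst (r X))" "fst (r X) \<subseteq> S" "open (snd (r X))"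
      "X = {f \<in> H. f ` fst (r X) \<subseteq> snd (r X)}"
      unfolding good_def by simp_all
  qed
  have "finite (r ` (F - {H}))"
    using F(1) by simp
  then obtain f where f: "f \<in> C" "\<And>K V. (K, V) \<in> r ` (F - {H}) \<Longrightarrow> f ` K \<subseteq> V"
  proof (rule approximatesE[OF approx])
    fix K V
    assume "(K, V) \<in> r ` (F - {H})"
    then obtain X where X: "X \<in> F - {H}" "(K, V) = r X"
      by (rule imageE)
    then have "K = fst (r X)" "V = snd (r X)" "p \<in> X"
      using F(2) by (metis fst_conv, metis snd_conv, auto)
    then show "compact K \<and> K \<subseteq> S \<inter> UNIV \<and> open V \<and> p ` K \<subseteq> V"
      using r[OF X(1)] by auto
  qed (rule that)
  have "f \<in> X" if X: "X \<in> F" for X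
  proof (cases "X = H")
    case False
    then have X': "X \<in> F - {H}"
      using X by simp
    then have "(fst (r X), snd (r X)) \<in> r ` (F - {H})"
      by simp
    then have "f ` fst (r X) \<subseteq> snd (r X)"
      by (rule f(2))
    then show ?thesis
      using r(4)[OF X'] f(1) C by auto
  qed (use f C in auto)
  then show "\<exists>f. f \<in> C \<and> f \<in> W"
    using f(1) F(3) by blast
qed

definition maps_boxes :: "('a \<Rightarrow> 'a) \<Rightarrow> ('a \<times> 'a \<times> 'a \<times> 'a) set \<Rightarrow> bool" where
  "maps_boxes f F \<longleftrightarrow> (\<forall>d1 d2 e1 e2. (d1, d2, e1, e2) \<in> F \<longrightarrow> f ` ({d1..d2} \<inter> S) \<subseteq> {e1<..<e2})"

lemma closure_imp_maps_boxes:
  assumes closure: "p \<in> CO closure_of A" and "finite F" "maps_boxes p F"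
  obtains f where "f \<in> A" "maps_boxes f F"
proof -
  define P where "P = (\<lambda>(d1, d2, e1, e2). ({d1..d2} \<inter> S, {e1<..<e2})) ` F"
  have P_cases: "\<exists>d1 d2 e1 e2. (d1, d2, e1, e2) \<in> F \<and> K = {d1..d2} \<inter> S \<and> V = {e1<..<e2}"
    if "(K, V) \<in> P" for K V
    using that unfolding P_def by auto
  obtain f where f: "f \<in> A" "\<And>K V. (K, V) \<in> P \<Longrightarrow> f ` K \<subseteq> V"
  proof (rule approximatesE[OF closure_imp_approximates[OF closure]])
    show "finite P"
      using \<open>finite F\<close> by (simp add: P_def)
    fix K V
    assume "(K, V) \<in> P"
    then obtain d1 d2 e1 e2 where "(d1, d2, e1, e2) \<in> F" "K = {d1..d2} \<inter> S" "V = {e1<..<e2}"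
      using P_cases by meson
    then show "compact K \<and> K \<subseteq> S \<inter> UNIV \<and> open V \<and> p ` K \<subseteq> V"
      using \<open>maps_boxes p F\<close> closed_S unfolding maps_boxes_def
      by (simp add: compact_Int_closed compact_Icc_conditionally_complete)
  qed (rule that)
  have "maps_boxes f F"
    unfolding maps_boxes_def
  proof (intro allI impI)
    fix d1 d2 e1 e2
    assume "(d1, d2, e1, e2) \<in> F"
    then have "({d1..d2} \<inter> S, {e1<..<e2}) \<in> P"
      unfolding P_def by (rule rev_image_eqI) simp
    then show "f ` ({d1..d2} \<inter> S) \<subseteq> {e1<..<e2}"
      by (rule f(2))
  qed
  then show thesis
    using that f(1) by meson
qed

lemma approximates_if_maps_boxes:
  assumes D: "order_dense_in D l u" and p: "p \<in> H"
    and bounds: "\<And>x. x \<in> S \<inter> {a..b} \<Longrightarrow> l < x \<and> x < u \<and> l < p x \<and> p x < u"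
    and boxes: "\<And>F. finite F \<Longrightarrow> F \<subseteq> D \<times> D \<times> D \<times> D \<Longrightarrow> maps_boxes p F \<Longrightarrow> \<exists>f\<in>C. maps_boxes f F"
  shows "approximates p C {a..b}"
proof (rule approximatesI)
  fix P
  assume P: "finite P" "\<And>K V. (K, V) \<in> P \<Longrightarrow> compact K \<and> K \<subseteq> S \<inter> {a..b} \<and> open V \<and> p ` K \<subseteq> V"
  define covers where "covers KV G \<longleftrightarrow> finite G \<and> G \<subseteq> D \<times> D \<times> D \<times> D \<and>
      (\<forall>d1 d2 e1 e2. (d1, d2, e1, e2) \<in> G \<longrightarrow> p ` ({d1..d2} \<inter> S) \<subseteq> {e1<..<e2} \<and> {e1<..<e2} \<subseteq> snd KV) \<and>
      (\<forall>x\<in>fst KV. \<exists>d1 d2 e1 e2. (d1, d2, e1, e2) \<in> G \<and> d1 < x \<and> x < d2)" for KV G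
  define cover where "cover KV = (SOME G. covers KV G)" for KV
  have cover: "covers (K, V) (cover (K, V))" if "(K, V) \<in> P" for K V
  proof -
    have KV: "compact K" "K \<subseteq> S \<inter> {a..b}" "open V" "p ` K \<subseteq> V"
      using P(2)[OF that] by auto
    then have K: "compact K" "K \<subseteq> S" "\<forall>x\<in>K. l < x \<and> x < u \<and> l < p x \<and> p x < u" "open V" "p ` K \<subseteq> V"
      using bounds by (auto simp: subset_iff)
    have "\<exists>G. covers (K, V) G"
      using compact_cover_by_dense_boxes[OF H_D(1)[OF p] D K] unfolding covers_def by simp
    then show ?thesis
      unfolding cover_def by (rule someI_ex)
  qed
  define F where "F = (\<Union>KV\<in>P. cover KV)"
  have cover': "covers KV (cover KV)" if "KV \<in> P" for KV
    using cover[of "fst KV" "snd KV"] that by simp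
  have "finite F"
    unfolding F_def using P(1) cover' by (auto simp: covers_def)
  moreover have "F \<subseteq> D \<times> D \<times> D \<times> D"
    unfolding F_def using cover' by (simp add: covers_def UN_least)
  moreover have "maps_boxes p F"
    unfolding maps_boxes_def
  proof (intro allI impI)
    fix d1 d2 e1 e2
    assume "(d1, d2, e1, e2) \<in> F"
    then obtain KV where "KV \<in> P" "(d1, d2, e1, e2) \<in> cover KV"
      unfolding F_def by blast
    then show "p ` ({d1..d2} \<inter> S) \<subseteq> {e1<..<e2}"
      using cover' unfolding covers_def by blast
  qed
  ultimately obtain f where f: "f \<in> C" "maps_boxes f F"
    using boxes by meson
  have "f ` K \<subseteq> V" if KV: "(K, V) \<in> P" for K V
  proof
    fix y
    assume "y \<in> f ` K"
    then obtain x where x: "x \<in> K" "y = f x"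
      by blast
    have "\<exists>d1 d2 e1 e2. (d1, d2, e1, e2) \<in> cover (K, V) \<and> d1 < x \<and> x < d2"
      using cover[OF KV] x(1) unfolding covers_def by simp
    then obtain d1 d2 e1 e2 where box: "(d1, d2, e1, e2) \<in> cover (K, V)" "d1 < x" "x < d2"
      by blast
    moreover have "(d1, d2, e1, e2) \<in> F"
      using box(1) KV unfolding F_def by blast
    moreover have "x \<in> {d1..d2} \<inter> S"
      using box(2,3) x(1) P(2)[OF KV] by auto
    ultimately have "f x \<in> {e1<..<e2}"
      using f(2) unfolding maps_boxes_def by blast
    moreover have "{e1<..<e2} \<subseteq> V"
      using cover[OF KV] box(1) unfolding covers_def by auto
    ultimately show "y \<in> V"
      using x(2) by blast
  qed
  then show "\<exists>f\<in>C. \<forall>K V. (K, V) \<in> P \<longrightarrow> f ` K \<subseteq> V"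
    using f(1) by blast
qed

lemma approximating_countable_subset:
  assumes closure: "p \<in> CO closure_of A"
  obtains C where "countable C" "C \<subseteq> A" "approximates p C {a..b}"
proof -
  have p: "p \<in> H"
    using closure in_closure_of[of p CO A] by (simp add: topspace_CO)
  define L where "L = S \<inter> {a..b}"
  have "compact L"
    unfolding L_def using closed_S compact_Icc_conditionally_complete by (rule closed_Int_compact)
  moreover have "continuous_on L p"
    using continuous_on_subset[OF H_D(1)[OF p]] by (simp add: L_def)
  ultimately have "compact (L \<union> p ` L)"
    by (simp add: compact_Un compact_continuous_image)
  then obtain l u where lu: "\<forall>x\<in>L \<union> p ` L. l < x \<and> x < u"
    by (rule compact_imp_strictly_bounded)
  obtain D where D: "countable D" "order_dense_in D l u"
    using separable_Icc[of l u] by blast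
  define NN where "NN = {F. finite F \<and> F \<subseteq> D \<times> D \<times> D \<times> D \<and> maps_boxes p F}"
  have "countable {F. finite F \<and> F \<subseteq> D \<times> D \<times> D \<times> D}"
    using D(1) by (simp add: countable_Collect_finite_subset)
  then have "countable NN"
    by (rule countable_subset[rotated]) (auto simp: NN_def)
  define g where "g F = (SOME f. f \<in> A \<and> maps_boxes f F)" for F
  have g: "g F \<in> A \<and> maps_boxes (g F) F" if "F \<in> NN" for F
  proof -
    have "finite F" "maps_boxes p F"
      using that unfolding NN_def by auto
    then obtain f where "f \<in> A" "maps_boxes f F"
      by (rule closure_imp_maps_boxes[OF closure])
    then have "\<exists>f. f \<in> A \<and> maps_boxes f F"
      by blast
    then show ?thesis
      unfolding g_def by (rule someI_ex)
  qed
  have "countable (g ` NN)" "g ` NN \<subseteq> A"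
    using \<open>countable NN\<close> g by auto
  moreover have "approximates p (g ` NN) {a..b}"
  proof (rule approximates_if_maps_boxes[OF D(2) p])
    show "l < x \<and> x < u \<and> l < p x \<and> p x < u" if "x \<in> S \<inter> {a..b}" for x
      using lu that unfolding L_def by auto
    show "\<exists>f\<in>g ` NN. maps_boxes f F" if "finite F" "F \<subseteq> D \<times> D \<times> D \<times> D" "maps_boxes p F" for F
    proof -
      have "F \<in> NN"
        using that unfolding NN_def by simp
      then show ?thesis
        using g[of F] by blast
    qed
  qed
  ultimately show thesis
    by (rule that)
qed

lemma countable_supports_bounded:
  assumes "countable C" "C \<subseteq> H" "a \<in> S" "b \<in> S"
  obtains l u where "l \<in> S" "u \<in> S" "l \<le> a" "b \<le> u" "\<And>f x. f \<in> C \<Longrightarrow> f x \<noteq> x \<Longrightarrow> l \<le> x \<and> x \<le> u"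
proof -
  define bounds where "bounds f ab \<longleftrightarrow> fst ab \<in> S \<and> snd ab \<in> S \<and> (\<forall>x. f x \<noteq> x \<longrightarrow> fst ab \<le> x \<and> x \<le> snd ab)"
    for f and ab :: "'a \<times> 'a"
  define bd where "bd f = (SOME ab. bounds f ab)" for f
  have bd: "bounds f (bd f)" if "f \<in> C" for f
  proof -
    have "f \<in> H"
      using assms(2) that by blast
    then obtain a' b' where "a' \<in> S" "b' \<in> S" "\<And>x. f x \<noteq> x \<Longrightarrow> a' \<le> x \<and> x \<le> b'"
      using H_support_bounded by metis
    then have "bounds f (a', b')"
      unfolding bounds_def by simp
    then show ?thesis
      unfolding bd_def by (rule someI)
  qed
  define T where "T = insert a (insert b (fst ` bd ` C \<union> snd ` bd ` C))"
  have "countable T" "T \<subseteq> S"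
    using assms(1,3,4) bd unfolding T_def bounds_def by auto
  then obtain l u where lu: "l \<in> S" "u \<in> S" "\<forall>t\<in>T. l \<le> t \<and> t \<le> u"
    using countable_bounded by meson
  have supp: "l \<le> x \<and> x \<le> u" if "f \<in> C" "f x \<noteq> x" for f x
  proof -
    have "fst (bd f) \<le> x \<and> x \<le> snd (bd f)"
      using bd[OF that(1)] that(2) unfolding bounds_def by simp
    moreover have "l \<le> fst (bd f)" "snd (bd f) \<le> u"
      using lu(3) that(1) unfolding T_def by auto
    ultimately show ?thesis
      by auto
  qed
  moreover have "l \<le> a" "b \<le> u"
    using lu(3) unfolding T_def by auto
  ultimately show thesis
    using that[OF lu(1,2) _ _ supp] by simp
qed

lemma approximating_sequence:
  assumes A: "A \<subseteq> H" and closure: "p \<in> CO closure_of A" and "a \<in> S" "b \<in> S"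
  obtains an bn Cn where "\<And>n. an n \<in> S" "\<And>n. bn n \<in> S" "\<And>n. an n \<le> a" "\<And>n. b \<le> bn n"
    "decseq an" "incseq bn" "\<And>n. countable (Cn n)" "\<And>n. Cn n \<subseteq> A"
    "\<And>n. approximates p (Cn n) {an n..bn n}"
    "\<And>n f x. f \<in> Cn n \<Longrightarrow> f x \<noteq> x \<Longrightarrow> an (Suc n) \<le> x \<and> x \<le> bn (Suc n)"
proof -
  define R where "R s \<longleftrightarrow> fst s \<in> S \<and> fst (snd s) \<in> S \<and> fst s \<le> a \<and> b \<le> fst (snd s) \<and>
      countable (snd (snd s)) \<and> snd (snd s) \<subseteq> A \<and> approximates p (snd (snd s)) {fst s..fst (snd s)}"
    for s :: "'a \<times> 'a \<times> ('a \<Rightarrow> 'a) set"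
  define Q where "Q s t \<longleftrightarrow> fst t \<le> fst s \<and> fst (snd s) \<le> fst (snd t) \<and>
      (\<forall>f\<in>snd (snd s). \<forall>x. f x \<noteq> x \<longrightarrow> fst t \<le> x \<and> x \<le> fst (snd t))"
    for s t :: "'a \<times> 'a \<times> ('a \<Rightarrow> 'a) set"
  have start: "\<exists>s. R s"
  proof -
    obtain C where "countable C" "C \<subseteq> A" "approximates p C {a..b}"
      by (rule approximating_countable_subset[OF closure])
    then have "R (a, b, C)"
      using assms(3,4) unfolding R_def by simp
    then show ?thesis ..
  qed
  have step: "\<exists>t. R t \<and> Q s t" if "R s" for s
  proof -
    obtain a' b' C where s: "s = (a', b', C)"
      by (metis prod_cases3)
    have "countable C" "C \<subseteq> H" "a' \<in> S" "b' \<in> S"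
      using that A unfolding s R_def by auto
    then obtain l u where lu: "l \<in> S" "u \<in> S" "l \<le> a'" "b' \<le> u"
      "\<And>f x. f \<in> C \<Longrightarrow> f x \<noteq> x \<Longrightarrow> l \<le> x \<and> x \<le> u"
      using countable_supports_bounded by metis
    obtain C' where "countable C'" "C' \<subseteq> A" "approximates p C' {l..u}"
      by (rule approximating_countable_subset[OF closure])
    then have "R (l, u, C') \<and> Q s (l, u, C')"
      using that lu unfolding s R_def Q_def by auto
    then show ?thesis ..
  qed
  have "\<exists>s. \<forall>n. R (s n) \<and> Q (s n) (s (Suc n))"
    by (rule dependent_nat_choice) (use start step in auto)
  then obtain s where s: "\<And>n. R (s n)" "\<And>n. Q (s n) (s (Suc n))"
    by blast
  show thesis
  proof (rule that[of "\<lambda>n. fst (s n)" "\<lambda>n. fst (snd (s n))" "\<lambda>n. snd (snd (s n))"])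
    show "decseq (\<lambda>n. fst (s n))" "incseq (\<lambda>n. fst (snd (s n)))"
      using s(2) unfolding Q_def by (auto intro: decseq_SucI incseq_SucI)
  qed (use s in \<open>auto simp: R_def Q_def\<close>)
qed

lemma H_moved_in_support:
  assumes f: "f \<in> H" and support: "\<And>x. f x \<noteq> x \<Longrightarrow> \<alpha> \<le> x \<and> x \<le> \<beta>" and "f y \<noteq> y"
  shows "\<alpha> \<le> y" "y \<le> \<beta>" "\<alpha> \<le> f y" "f y \<le> \<beta>"
  using support[OF assms(3)] support[OF H_moved_image_moved[OF f assms(3)]] by auto

lemma approximation_extends_beyond_Icc:
  assumes p: "p \<in> H" "\<And>x. p x \<noteq> x \<Longrightarrow> a < x \<and> x < b"
    and f: "f \<in> H" "\<And>x. f x \<noteq> x \<Longrightarrow> \<alpha> \<le> x \<and> x \<le> \<beta>"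
    and a'b': "a' \<in> S" "b' \<in> S" "a' \<le> a" "b \<le> b'"
    and K: "K \<subseteq> S" "p ` K \<subseteq> V" "f ` (K \<inter> {a'..b'}) \<subseteq> V"
    and upper: "\<gamma> < b'" "\<gamma> < f b'" "K \<inter> {\<gamma><..\<beta>} = {} \<or> {\<gamma><..\<beta>} \<subseteq> V"
    and lower: "a' < \<delta>" "f a' < \<delta>" "K \<inter> {\<alpha>..<\<delta>} = {} \<or> {\<alpha>..<\<delta>} \<subseteq> V"
  shows "f ` K \<subseteq> V"
proof (rule image_subsetI)
  fix y
  assume y: "y \<in> K"
  then have "y \<in> S"
    using K(1) by blast
  consider "y \<in> {a'..b'}" | "b' < y" | "y < a'"
    by force
  then show "f y \<in> V"
  proof cases
    case 1
    then show ?thesis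
      using K(3) y by blast
  next
    case 2
    show ?thesis
    proof (cases "f y = y")
      case True
      then show ?thesis
        using p(2)[of y] 2 a'b'(4) K(2) y by force
    next
      case False
      note bounds = H_moved_in_support[OF f False]
      have "f b' < f y"
        using H_strict_mono[OF f(1) a'b'(2) \<open>y \<in> S\<close> 2] .
      then have "f y \<in> {\<gamma><..\<beta>}" "y \<in> K \<inter> {\<gamma><..\<beta>}"
        using bounds upper(1,2) 2 y by auto
      then show ?thesis
        using upper(3) by blast
    qed
  next
    case 3
    show ?thesis
    proof (cases "f y = y")
      case True
      then show ?thesis
        using p(2)[of y] 3 a'b'(3) K(2) y by force
    next
      case False
      note bounds = H_moved_in_support[OF f False]
      have "f y < f a'"
        using H_strict_mono[OF f(1) \<open>y \<in> S\<close> a'b'(1) 3] .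
      then have "f y \<in> {\<alpha>..<\<delta>}" "y \<in> K \<inter> {\<alpha>..<\<delta>}"
        using bounds lower(1,2) 3 y by auto
      then show ?thesis
        using lower(3) by blast
    qed
  qed
qed

lemma approximates_at_stage:
  assumes p: "p \<in> H" "\<And>x. p x \<noteq> x \<Longrightarrow> a < x \<and> x < b"
    and a'b': "a' \<in> S" "b' \<in> S" "a' \<le> a" "a \<le> b" "b \<le> b'"
    and C: "C \<subseteq> H" "approximates p C {a'..b'}" "\<And>f x. f \<in> C \<Longrightarrow> f x \<noteq> x \<Longrightarrow> \<alpha> \<le> x \<and> x \<le> \<beta>"
    and P: "finite P" "\<And>K V. (K, V) \<in> P \<Longrightarrow> compact K \<and> K \<subseteq> S \<and> open V \<and> p ` K \<subseteq> V"
    and upper: "\<And>K V. (K, V) \<in> P \<Longrightarrow> \<gamma> K V < b' \<and> (K \<inter> {\<gamma> K V<..\<beta>} = {} \<or> {\<gamma> K V<..\<beta>} \<subseteq> V)"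
    and lower: "\<And>K V. (K, V) \<in> P \<Longrightarrow> a' < \<delta> K V \<and> (K \<inter> {\<alpha>..<\<delta> K V} = {} \<or> {\<alpha>..<\<delta> K V} \<subseteq> V)"
  shows "\<exists>f\<in>C. \<forall>K V. (K, V) \<in> P \<longrightarrow> f ` K \<subseteq> V"
proof -
  define P' where "P' = (\<lambda>(K, V). (K \<inter> {a'..b'}, V)) ` P \<union> (\<lambda>(K, V). ({b'}, {\<gamma> K V<..})) ` P
      \<union> (\<lambda>(K, V). ({a'}, {..<\<delta> K V})) ` P"
  have "p a' = a'" "p b' = b'"
    using p(2)[of a'] p(2)[of b'] a'b' by (cases "p a' = a'"; cases "p b' = b'"; auto)+
  obtain f where f: "f \<in> C" "\<And>K V. (K, V) \<in> P' \<Longrightarrow> f ` K \<subseteq> V"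
  proof (rule approximatesE[OF C(2)])
    show "finite P'"
      using P(1) by (simp add: P'_def)
    fix K' V'
    assume "(K', V') \<in> P'"
    then consider K where "(K, V') \<in> P" "K' = K \<inter> {a'..b'}"
      | K V where "(K, V) \<in> P" "K' = {b'}" "V' = {\<gamma> K V<..}"
      | K V where "(K, V) \<in> P" "K' = {a'}" "V' = {..<\<delta> K V}"
      unfolding P'_def by auto
    then show "compact K' \<and> K' \<subseteq> S \<inter> {a'..b'} \<and> open V' \<and> p ` K' \<subseteq> V'"
    proof cases
      case (1 K)
      then show ?thesis
        using P(2)[OF 1(1)] by (auto simp: compact_Int_closed compact_Icc_conditionally_complete)
    next
      case (2 K V)
      then show ?thesis
        using upper[OF 2(1)] \<open>p b' = b'\<close> a'b' by auto
    next
      case (3 K V)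
      then show ?thesis
        using lower[OF 3(1)] \<open>p a' = a'\<close> a'b' by auto
    qed
  qed (rule that)
  have "f ` K \<subseteq> V" if KV: "(K, V) \<in> P" for K V
  proof (rule approximation_extends_beyond_Icc[OF p _ C(3)[OF f(1)] a'b'(1,2,3,5)])
    show "f \<in> H"
      using f(1) C(1) by blast
    have "(K \<inter> {a'..b'}, V) \<in> P'" "({b'}, {\<gamma> K V<..}) \<in> P'" "({a'}, {..<\<delta> K V}) \<in> P'"
      unfolding P'_def using KV by force+
    then show "f ` (K \<inter> {a'..b'}) \<subseteq> V" "\<gamma> K V < f b'" "f a' < \<delta> K V"
      using f(2) by auto
  qed (use P(2)[OF KV] upper[OF KV] lower[OF KV] in auto)
  then show ?thesis
    using f(1) by blast
qed

lemma approximates_Union_chain: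
  assumes p: "p \<in> H" "\<And>x. p x \<noteq> x \<Longrightarrow> a < x \<and> x < b" and "a \<le> b"
    and an: "\<And>n. an n \<in> S" "\<And>n. an n \<le> a" "decseq an"
    and bn: "\<And>n. bn n \<in> S" "\<And>n. b \<le> bn n" "incseq bn"
    and Cn: "\<And>n. Cn n \<subseteq> H" "\<And>n. approximates p (Cn n) {an n..bn n}"
      "\<And>n f x. f \<in> Cn n \<Longrightarrow> f x \<noteq> x \<Longrightarrow> an (Suc n) \<le> x \<and> x \<le> bn (Suc n)"
  shows "approximates p (\<Union>n. Cn n) UNIV"
proof (rule approximatesI)
  fix P
  assume P: "finite P" "\<And>K V. (K, V) \<in> P \<Longrightarrow> compact K \<and> K \<subseteq> S \<inter> UNIV \<and> open V \<and> p ` K \<subseteq> V"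
  have "countable (range an \<union> range bn)" "range an \<union> range bn \<subseteq> S"
    using an(1) bn(1) by auto
  then obtain l u where lu: "\<forall>t\<in>range an \<union> range bn. l \<le> t \<and> t \<le> u"
    using countable_bounded by meson
  then have bdd: "bdd_below (range an)" "bdd_above (range bn)"
    by (auto intro!: bdd_belowI[of _ l] bdd_aboveI[of _ u])
  define \<alpha> where "\<alpha> = Inf (range an)"
  define \<beta> where "\<beta> = Sup (range bn)"
  have an_lim: "an \<longlonglongrightarrow> \<alpha>" and bn_lim: "bn \<longlonglongrightarrow> \<beta>"
    unfolding \<alpha>_def \<beta>_def using LIMSEQ_decseq_INF[OF bdd(1) an(3)] LIMSEQ_incseq_SUP[OF bdd(2) bn(3)] by simp_all
  have \<alpha>: "\<alpha> \<le> an n" and \<beta>: "bn n \<le> \<beta>" for n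
    using cINF_lower[OF bdd(1)] cSUP_upper[OF _ bdd(2)] unfolding \<alpha>_def \<beta>_def by auto
  have "\<alpha> \<le> a" "b \<le> \<beta>"
    using order_trans[OF \<alpha>[of 0] an(2)] order_trans[OF bn(2) \<beta>[of 0]] .
  then have "p \<alpha> = \<alpha>" "p \<beta> = \<beta>"
    using p(2)[of \<alpha>] p(2)[of \<beta>] by (cases "p \<alpha> = \<alpha>"; cases "p \<beta> = \<beta>"; auto)+
  define upper where "upper K V \<gamma> \<longleftrightarrow> \<gamma> < \<beta> \<and> (K \<inter> {\<gamma><..\<beta>} = {} \<or> {\<gamma><..\<beta>} \<subseteq> V)" for K V \<gamma>
  define lower where "lower K V \<delta> \<longleftrightarrow> \<alpha> < \<delta> \<and> (K \<inter> {\<alpha>..<\<delta>} = {} \<or> {\<alpha>..<\<delta>} \<subseteq> V)" for K V \<delta>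
  define \<gamma> where "\<gamma> K V = (SOME \<gamma>. upper K V \<gamma>)" for K V
  define \<delta> where "\<delta> K V = (SOME \<delta>. lower K V \<delta>)" for K V
  have margins: "upper K V (\<gamma> K V)" "lower K V (\<delta> K V)" if "(K, V) \<in> P" for K V
  proof -
    have K: "compact K" "open V" "p ` K \<subseteq> V"
      using P(2)[OF that] by auto
    have "\<beta> \<in> V" if "\<beta> \<in> K"
      using K(3) that \<open>p \<beta> = \<beta>\<close> by (metis image_eqI subsetD)
    then obtain \<gamma>0 where "\<gamma>0 < \<beta>" "K \<inter> {\<gamma>0<..\<beta>} = {} \<or> {\<gamma>0<..\<beta>} \<subseteq> V"
      by (rule compact_left_margin[OF K(1,2)])
    then have "upper K V \<gamma>0"
      unfolding upper_def by simp
    then show "upper K V (\<gamma> K V)"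
      unfolding \<gamma>_def by (rule someI)
    have "\<alpha> \<in> V" if "\<alpha> \<in> K"
      using K(3) that \<open>p \<alpha> = \<alpha>\<close> by (metis image_eqI subsetD)
    then obtain \<delta>0 where "\<alpha> < \<delta>0" "K \<inter> {\<alpha>..<\<delta>0} = {} \<or> {\<alpha>..<\<delta>0} \<subseteq> V"
      by (rule compact_right_margin[OF K(1,2)])
    then have "lower K V \<delta>0"
      unfolding lower_def by simp
    then show "lower K V (\<delta> K V)"
      unfolding \<delta>_def by (rule someI)
  qed
  have "\<forall>KV\<in>P. \<forall>\<^sub>F n in sequentially. \<gamma> (fst KV) (snd KV) < bn n \<and> an n < \<delta> (fst KV) (snd KV)"
  proof
    fix KV
    assume "KV \<in> P"
    then have "\<gamma> (fst KV) (snd KV) < \<beta>" "\<alpha> < \<delta> (fst KV) (snd KV)"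
      using margins[of "fst KV" "snd KV"] unfolding upper_def lower_def by auto
    then show "\<forall>\<^sub>F n in sequentially. \<gamma> (fst KV) (snd KV) < bn n \<and> an n < \<delta> (fst KV) (snd KV)"
      using order_tendstoD(1)[OF bn_lim] order_tendstoD(2)[OF an_lim] by (simp add: eventually_conj)
  qed
  then have "\<forall>\<^sub>F n in sequentially. \<forall>KV\<in>P. \<gamma> (fst KV) (snd KV) < bn n \<and> an n < \<delta> (fst KV) (snd KV)"
    by (rule eventually_ball_finite[OF P(1)])
  then obtain n where n: "\<forall>KV\<in>P. \<gamma> (fst KV) (snd KV) < bn n \<and> an n < \<delta> (fst KV) (snd KV)"
    unfolding eventually_sequentially by blast
  have "\<exists>f\<in>Cn n. \<forall>K V. (K, V) \<in> P \<longrightarrow> f ` K \<subseteq> V"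
  proof (rule approximates_at_stage[OF p an(1) bn(1) an(2) \<open>a \<le> b\<close> bn(2) Cn(1,2) _ P(1)])
    show "\<alpha> \<le> x \<and> x \<le> \<beta>" if "f \<in> Cn n" "f x \<noteq> x" for f x
      using Cn(3)[OF that] \<alpha>[of "Suc n"] \<beta>[of "Suc n"] by auto
    show "compact K \<and> K \<subseteq> S \<and> open V \<and> p ` K \<subseteq> V" if "(K, V) \<in> P" for K V
      using P(2)[OF that] by auto
    show "\<gamma> K V < bn n \<and> (K \<inter> {\<gamma> K V<..\<beta>} = {} \<or> {\<gamma> K V<..\<beta>} \<subseteq> V)" if "(K, V) \<in> P" for K V
      using margins(1)[OF that] n that unfolding upper_def by fastforce
    show "an n < \<delta> K V \<and> (K \<inter> {\<alpha>..<\<delta> K V} = {} \<or> {\<alpha>..<\<delta> K V} \<subseteq> V)" if "(K, V) \<in> P" for K V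
      using margins(2)[OF that] n that unfolding lower_def by fastforce
  qed
  then show "\<exists>f\<in>\<Union>n. Cn n. \<forall>K V. (K, V) \<in> P \<longrightarrow> f ` K \<subseteq> V"
    by blast
qed

theorem countably_tight_CO: "countably_tight CO"
  unfolding countably_tight_def
proof (intro allI impI, elim conjE)
  fix A p
  assume A: "A \<subseteq> topspace CO" and closure: "p \<in> CO closure_of A"
  have AH: "A \<subseteq> H" and p: "p \<in> H"
    using A closure in_closure_of[of p CO A] by (auto simp: topspace_CO)
  obtain a b0 where "a \<in> S" "b0 \<in> S" and moved: "\<And>x. p x \<noteq> x \<Longrightarrow> a < x \<and> x < b0"
    using H_support_strictly_bounded[OF p] by metis
  define b where "b = max a b0"
  have "b \<in> S" "a \<le> b"
    using \<open>a \<in> S\<close> \<open>b0 \<in> S\<close> by (auto simp: b_def max_def)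
  have support: "a < x \<and> x < b" if "p x \<noteq> x" for x
    using moved[OF that] by (auto simp: b_def less_max_iff_disj)
  show "\<exists>C\<subseteq>A. countable C \<and> p \<in> CO closure_of C"
  proof (rule approximating_sequence[OF AH closure \<open>a \<in> S\<close> \<open>b \<in> S\<close>])
    fix an bn Cn
    assume an: "\<And>n. an n \<in> S" and bn: "\<And>n. bn n \<in> S" and an_a: "\<And>n. an n \<le> a"
      and b_bn: "\<And>n. b \<le> bn n" and mono: "decseq an" "incseq bn"
      and Cn: "\<And>n. countable (Cn n)" "\<And>n. Cn n \<subseteq> A" "\<And>n. approximates p (Cn n) {an n..bn n}"
        "\<And>n f x. f \<in> Cn n \<Longrightarrow> f x \<noteq> x \<Longrightarrow> an (Suc n) \<le> x \<and> x \<le> bn (Suc n)"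
    have CnH: "\<And>n. Cn n \<subseteq> H"
      using AH Cn(2) by blast
    have "approximates p (\<Union>n. Cn n) UNIV"
      by (rule approximates_Union_chain[OF p support \<open>a \<le> b\<close> an an_a mono(1) bn b_bn mono(2) CnH Cn(3,4)])
    then have "p \<in> CO closure_of (\<Union>n. Cn n)"
      using approximates_imp_closure[OF p] AH Cn(2) by blast
    moreover have "(\<Union>n. Cn n) \<subseteq> A" "countable (\<Union>n. Cn n)"
      using Cn(1,2) by auto
    ultimately show "\<exists>C\<subseteq>A. countable C \<and> p \<in> CO closure_of C"
      by blast
  qed
qed

end


definition lex_le :: "('w::wellorder \<times> real) \<Rightarrow> ('w \<times> real) \<Rightarrow> bool" where
  "lex_le p q \<longleftrightarrow> p = q \<or> lex_less p q"

lemma lex_le_iff: "lex_le p q \<longleftrightarrow> fst p < fst q \<or> (fst p = fst q \<and> snd p \<le> snd q)"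
  unfolding lex_le_def lex_less_def by (cases p; cases q) auto

lemma lex_less_trans: "lex_less p q \<Longrightarrow> lex_less q r \<Longrightarrow> lex_less p r"
  unfolding lex_less_def by (auto intro: less_trans)

lemma lex_less_irrefl: "\<not> lex_less p p"
  unfolding lex_less_def by auto

lemma lex_less_total: "p \<noteq> q \<Longrightarrow> lex_less p q \<or> lex_less q p"
  unfolding lex_less_def by (cases p; cases q) (auto simp: neq_iff)

lemma lex_less_asym: "lex_less p q \<Longrightarrow> \<not> lex_less q p"
  unfolding lex_less_def by auto

lemma lex_not_less: "\<not> lex_less p q \<longleftrightarrow> lex_le q p"
  using lex_less_total lex_less_asym unfolding lex_le_def by (metis lex_less_irrefl)

lemma LR_inf:
  assumes ne: "X \<noteq> {}" and XR: "X \<subseteq> long_ray_carrier"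
  shows "\<exists>g\<in>long_ray_carrier. (\<forall>x\<in>X. lex_le g x) \<and> (\<forall>z. (\<forall>x\<in>X. lex_le z x) \<longrightarrow> lex_le z g)"
proof -
  have ex: "\<exists>w r. (w, r) \<in> X" using ne by auto
  define w0 where "w0 = (LEAST w. \<exists>r. (w, r) \<in> X)"
  have w0X: "\<exists>r. (w0, r) \<in> X" unfolding w0_def using ex by (rule LeastI_ex)
  have w0le: "w0 \<le> w" if "(w, r) \<in> X" for w r unfolding w0_def using that by (intro Least_le) blast
  define Rs where "Rs = {r. (w0, r) \<in> X}"
  have Rsne: "Rs \<noteq> {}" using w0X unfolding Rs_def by auto
  have Rs01: "0 \<le> r \<and> r < 1" if "r \<in> Rs" for r using that XR unfolding Rs_def long_ray_carrier_def by auto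
  have bddR: "bdd_below Rs" using Rs01 by (auto intro: bdd_belowI[of _ 0])
  define r0 where "r0 = Inf Rs"
  have r0ge: "0 \<le> r0" unfolding r0_def using Rsne Rs01 by (intro cInf_greatest) auto
  obtain r1 where r1: "r1 \<in> Rs" using Rsne by auto
  have "r0 \<le> r1" unfolding r0_def using r1 bddR by (rule cInf_lower)
  then have r0lt: "r0 < 1" using Rs01[OF r1] by simp
  have gR: "(w0, r0) \<in> long_ray_carrier" using r0ge r0lt unfolding long_ray_carrier_def by simp
  have lb: "\<forall>x\<in>X. lex_le (w0, r0) x"
  proof
    fix x assume x: "x \<in> X"
    obtain w r where wr: "x = (w, r)" by (cases x)
    have "w0 \<le> w" using w0le x wr by simp
    moreover have "w = w0 \<Longrightarrow> r0 \<le> r" unfolding r0_def using x wr bddR by (intro cInf_lower) (auto simp: Rs_def)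
    ultimately show "lex_le (w0, r0) x" unfolding lex_le_iff wr by (auto simp: le_less)
  qed
  have gr: "\<forall>z. (\<forall>x\<in>X. lex_le z x) \<longrightarrow> lex_le z (w0, r0)"
  proof (intro allI impI)
    fix z assume z: "\<forall>x\<in>X. lex_le z x"
    have zr: "\<And>r. r \<in> Rs \<Longrightarrow> fst z < w0 \<or> (fst z = w0 \<and> snd z \<le> r)"
      using z unfolding Rs_def lex_le_iff by fastforce
    show "lex_le z (w0, r0)"
    proof (cases "fst z < w0")
      case True then show ?thesis unfolding lex_le_iff by simp
    next
      case False
      then have "fst z = w0" "\<And>r. r \<in> Rs \<Longrightarrow> snd z \<le> r" using zr r1 by auto
      moreover have "snd z \<le> r0" unfolding r0_def using Rsne \<open>\<And>r. r \<in> Rs \<Longrightarrow> snd z \<le> r\<close> by (rule cInf_greatest)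
      ultimately show ?thesis unfolding lex_le_iff by simp
    qed
  qed
  show ?thesis using gR lb gr by blast
qed

lemma LR_sup:
  assumes ne: "X \<noteq> {}" and XR: "X \<subseteq> long_ray_carrier" and uR: "u \<in> long_ray_carrier"
    and ub: "\<forall>x\<in>X. lex_le x u"
  shows "\<exists>s\<in>long_ray_carrier. (\<forall>x\<in>X. lex_le x s) \<and> (\<forall>z\<in>long_ray_carrier. (\<forall>x\<in>X. lex_le x z) \<longrightarrow> lex_le s z)"
proof -
  have fub: "\<forall>x\<in>X. fst x \<le> fst u" using ub unfolding lex_le_iff by auto
  define w0 where "w0 = (LEAST w. \<forall>x\<in>X. fst x \<le> w)"
  have w0ub: "\<forall>x\<in>X. fst x \<le> w0" unfolding w0_def using fub by (rule LeastI)
  have w0min: "w0 \<le> w" if "\<forall>x\<in>X. fst x \<le> w" for w unfolding w0_def using that by (rule Least_le)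
  have zfst: "w0 \<le> fst z" if "\<forall>x\<in>X. lex_le x z" for z
  proof (rule w0min, intro ballI)
    fix x assume "x \<in> X" then show "fst x \<le> fst z" using that unfolding lex_le_iff by auto
  qed
  show ?thesis
  proof (cases "\<exists>r. (w0, r) \<in> X")
    case True
    define Rs where "Rs = {r. (w0, r) \<in> X}"
    have Rsne: "Rs \<noteq> {}" using True unfolding Rs_def by auto
    have Rs01: "0 \<le> r \<and> r < 1" if "r \<in> Rs" for r using that XR unfolding Rs_def long_ray_carrier_def by auto
    have bddR: "bdd_above Rs"
    proof (rule bdd_aboveI[where M=1])
      fix r assume "r \<in> Rs" then show "r \<le> 1" using Rs01 by (simp add: less_imp_le)
    qed
    define r0 where "r0 = Sup Rs"
    obtain r1 where r1: "r1 \<in> Rs" using Rsne by auto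
    have r0ge: "0 \<le> r0" using cSup_upper[OF r1 bddR] Rs01[OF r1] unfolding r0_def by simp
    have r0le: "r0 \<le> 1" unfolding r0_def using Rsne Rs01 by (intro cSup_least) (auto simp: less_imp_le)
    have zsnd: "r0 \<le> snd z" if "\<forall>x\<in>X. lex_le x z" "fst z = w0" for z
      unfolding r0_def
    proof (rule cSup_least[OF Rsne])
      fix r assume "r \<in> Rs"
      then have "(w0, r) \<in> X" unfolding Rs_def by simp
      then show "r \<le> snd z" using that unfolding lex_le_iff by fastforce
    qed
    show ?thesis
    proof (cases "r0 < 1")
      case True
      have sR: "(w0, r0) \<in> long_ray_carrier" using r0ge True unfolding long_ray_carrier_def by simp
      have up: "\<forall>x\<in>X. lex_le x (w0, r0)"
      proof
        fix x assume x: "x \<in> X"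
        have "fst x \<le> w0" using w0ub x by simp
        moreover have "snd x \<le> r0" if "fst x = w0"
        proof -
          have "(w0, snd x) \<in> X" using x that by (metis prod.collapse)
          then have "snd x \<in> Rs" unfolding Rs_def by simp
          then show ?thesis unfolding r0_def using bddR by (rule cSup_upper)
        qed
        ultimately show "lex_le x (w0, r0)" unfolding lex_le_iff by (auto simp: le_less)
      qed
      have le: "\<forall>z\<in>long_ray_carrier. (\<forall>x\<in>X. lex_le x z) \<longrightarrow> lex_le (w0, r0) z"
      proof (intro ballI impI)
        fix z assume "z \<in> long_ray_carrier" and z: "\<forall>x\<in>X. lex_le x z"
        have "w0 \<le> fst z" using zfst z by simp
        moreover have "fst z = w0 \<Longrightarrow> r0 \<le> snd z" using zsnd z by simp
        ultimately show "lex_le (w0, r0) z" unfolding lex_le_iff by (auto simp: le_less)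
      qed
      show ?thesis using sR up le by blast
    next
      case False
      then have r01: "r0 = 1" using r0le by simp
      have "fst u \<noteq> w0"
      proof
        assume "fst u = w0"
        then have "r0 \<le> snd u" using zsnd ub by simp
        then show False using uR r01 unfolding long_ray_carrier_def by auto
      qed
      then have w0u: "w0 < fst u" using zfst ub le_less by blast
      define w1 where "w1 = (LEAST w. w0 < w)"
      have w1gt: "w0 < w1" unfolding w1_def using w0u by (rule LeastI)
      have w1min: "w1 \<le> w" if "w0 < w" for w unfolding w1_def using that by (rule Least_le)
      have sR: "(w1, 0) \<in> long_ray_carrier" unfolding long_ray_carrier_def by simp
      have up: "\<forall>x\<in>X. lex_le x (w1, 0)"
      proof
        fix x assume x: "x \<in> X"
        have "fst x \<le> w0" using w0ub x by simp
        then have "fst x < w1" using w1gt by simp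
        then show "lex_le x (w1, 0)" unfolding lex_le_iff by simp
      qed
      have le: "\<forall>z\<in>long_ray_carrier. (\<forall>x\<in>X. lex_le x z) \<longrightarrow> lex_le (w1, 0) z"
      proof (intro ballI impI)
        fix z assume zR: "z \<in> long_ray_carrier" and z: "\<forall>x\<in>X. lex_le x z"
        have "w0 \<le> fst z" using zfst z by simp
        moreover have "fst z \<noteq> w0"
        proof
          assume "fst z = w0"
          then have "r0 \<le> snd z" using zsnd z by simp
          then show False using zR r01 unfolding long_ray_carrier_def by auto
        qed
        ultimately have "w0 < fst z" by simp
        then have "w1 \<le> fst z" by (rule w1min)
        moreover have "0 \<le> snd z" using zR unfolding long_ray_carrier_def by auto
        ultimately show "lex_le (w1, 0) z" unfolding lex_le_iff by (auto simp: le_less)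
      qed
      show ?thesis using sR up le by blast
    qed
  next
    case False
    have sR: "(w0, 0) \<in> long_ray_carrier" unfolding long_ray_carrier_def by simp
    have up: "\<forall>x\<in>X. lex_le x (w0, 0)"
    proof
      fix x assume x: "x \<in> X"
      have "fst x \<le> w0" using w0ub x by simp
      moreover have "fst x \<noteq> w0" using False x by (metis prod.collapse)
      ultimately show "lex_le x (w0, 0)" unfolding lex_le_iff by simp
    qed
    have le: "\<forall>z\<in>long_ray_carrier. (\<forall>x\<in>X. lex_le x z) \<longrightarrow> lex_le (w0, 0) z"
    proof (intro ballI impI)
      fix z assume zR: "z \<in> long_ray_carrier" and z: "\<forall>x\<in>X. lex_le x z"
      have "w0 \<le> fst z" using zfst z by simp
      moreover have "0 \<le> snd z" using zR unfolding long_ray_carrier_def by auto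
      ultimately show "lex_le (w0, 0) z" unfolding lex_le_iff by (auto simp: le_less)
    qed
    show ?thesis using sR up le by blast
  qed
qed

definition wbot :: "'w::wellorder" where "wbot = (LEAST w. True)"

lemma wbot_le: "wbot \<le> (w::'w::wellorder)"
  unfolding wbot_def by (rule Least_le) simp

lemma carrier_iff: "(b, w, r) \<in> long_line_carrier \<longleftrightarrow> 0 \<le> r \<and> r < 1 \<and> \<not> (b = False \<and> w = wbot \<and> r = 0)"
  unfolding long_line_carrier_def long_ray_carrier_def wbot_def by auto

lemma lll_iff: "long_line_less (b, p) (c, q) = (if b then c \<and> lex_less p q else c \<or> lex_less q p)"
  unfolding long_line_less_def by (cases b; cases c) auto

definition ll_le :: "(bool \<times> 'w::wellorder \<times> real) \<Rightarrow> (bool \<times> 'w \<times> real) \<Rightarrow> bool" where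
  "ll_le x y \<longleftrightarrow> x = y \<or> long_line_less x y"

lemma ll_le_iff: "ll_le (b, p) (c, q) = (if b then c \<and> lex_le p q else c \<or> lex_le q p)"
  unfolding ll_le_def lll_iff lex_le_def by (cases b; cases c) auto

lemma lll_irrefl: "\<not> long_line_less x x"
  by (cases x) (simp add: lll_iff lex_less_irrefl)

lemma lll_trans: "long_line_less x y \<Longrightarrow> long_line_less y z \<Longrightarrow> long_line_less x z"
  by (cases x; cases y; cases z) (auto simp: lll_iff split: if_splits intro: lex_less_trans)

lemma lll_total: "x \<noteq> y \<Longrightarrow> long_line_less x y \<or> long_line_less y x"
proof -
  assume ne: "x \<noteq> y"
  obtain b p where x: "x = (b, p)" by (metis surj_pair)
  obtain c q where y: "y = (c, q)" by (metis surj_pair)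
  show ?thesis
  proof (cases "b = c")
    case True
    then have "p \<noteq> q" using ne x y by auto
    then have "lex_less p q \<or> lex_less q p" by (rule lex_less_total)
    then show ?thesis using x y True by (cases c) (auto simp: lll_iff)
  next
    case False
    then show ?thesis using x y by (cases b; cases c) (auto simp: lll_iff)
  qed
qed

typedef (overloaded) ('w::wellorder) ll = "long_line_carrier :: (bool \<times> 'w \<times> real) set"
  morphisms Rep_ll Abs_ll
  by (intro exI[of _ "(True, wbot, 0)"]) (simp add: carrier_iff)

instantiation ll :: (wellorder) linorder
begin
definition less_ll :: "'a ll \<Rightarrow> 'a ll \<Rightarrow> bool" where
  "less_ll x y \<longleftrightarrow> long_line_less (Rep_ll x) (Rep_ll y)"
definition less_eq_ll :: "'a ll \<Rightarrow> 'a ll \<Rightarrow> bool" where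
  "less_eq_ll x y \<longleftrightarrow> x = y \<or> long_line_less (Rep_ll x) (Rep_ll y)"
instance
proof
  fix x y z :: "'a ll"
  show "(x < y) = (x \<le> y \<and> \<not> y \<le> x)"
    unfolding less_ll_def less_eq_ll_def using lll_irrefl lll_trans by blast
  show "x \<le> x" unfolding less_eq_ll_def by simp
  show "x \<le> y \<Longrightarrow> y \<le> z \<Longrightarrow> x \<le> z" unfolding less_eq_ll_def using lll_trans by blast
  show "x \<le> y \<Longrightarrow> y \<le> x \<Longrightarrow> x = y" unfolding less_eq_ll_def using lll_irrefl lll_trans by blast
  show "x \<le> y \<or> y \<le> x" unfolding less_eq_ll_def using lll_total Rep_ll_inject by blast
qed
end

lemma le_ll_Rep: "x \<le> y \<longleftrightarrow> ll_le (Rep_ll x) (Rep_ll y)"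
  unfolding less_eq_ll_def ll_le_def using Rep_ll_inject by blast

instantiation ll :: (wellorder) distrib_lattice
begin
definition "(inf :: 'a ll \<Rightarrow> 'a ll \<Rightarrow> 'a ll) = min"
definition "(sup :: 'a ll \<Rightarrow> 'a ll \<Rightarrow> 'a ll) = max"
instance
  by standard (auto simp add: inf_ll_def sup_ll_def max_min_distrib2)
end

lemma Rep_ll_carrier: "Rep_ll x \<in> long_line_carrier"
  by (rule Rep_ll)

lemma Rep_ll_cases:
  obtains b w r where "Rep_ll x = (b, w, r)" "0 \<le> r" "r < 1" "\<not> (b = False \<and> w = wbot \<and> r = 0)"
proof -
  obtain b w r where e: "Rep_ll x = (b, w, r)" by (metis prod_cases3)
  moreover have "(b, w, r) \<in> long_line_carrier" using Rep_ll_carrier[of x] e by simp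
  ultimately show ?thesis using that by (simp add: carrier_iff)
qed

lemma ll_lub:
  fixes X :: "'w::wellorder ll set"
  assumes ne: "X \<noteq> {}" and bdd: "\<exists>u. \<forall>x\<in>X. x \<le> u"
  shows "\<exists>s. (\<forall>x\<in>X. x \<le> s) \<and> (\<forall>z. (\<forall>x\<in>X. x \<le> z) \<longrightarrow> s \<le> z)"
proof -
  obtain u where u: "\<forall>x\<in>X. x \<le> u" using bdd by blast
  have Rsnd: "snd (Rep_ll x) \<in> long_ray_carrier" for x :: "'w ll"
  proof -
    obtain b p where e: "Rep_ll x = (b, p)" by (metis surj_pair)
    have "(b, p) \<in> long_line_carrier" using Rep_ll_carrier[of x] e by simp
    then show ?thesis using e by (simp add: long_line_carrier_def)
  qed
  show ?thesis
  proof (cases "\<exists>x\<in>X. fst (Rep_ll x) = True")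
    case True
    define XT where "XT = {p. \<exists>x\<in>X. Rep_ll x = (True, p)}"
    obtain x0 where x0: "x0 \<in> X" "fst (Rep_ll x0) = True" using True by blast
    have XTne: "XT \<noteq> {}" unfolding XT_def using x0 by (intro notI) (cases "Rep_ll x0", auto)
    have XTR: "XT \<subseteq> long_ray_carrier"
    proof
      fix p assume "p \<in> XT"
      then obtain x where "Rep_ll x = (True, p)" unfolding XT_def by blast
      then show "p \<in> long_ray_carrier" using Rsnd[of x] by simp
    qed
    have "ll_le (Rep_ll x0) (Rep_ll u)" using u x0 le_ll_Rep by blast
    then have uT: "fst (Rep_ll u) = True" using x0(2)
      by (cases "Rep_ll x0"; cases "Rep_ll u") (auto simp: ll_le_iff split: if_splits)
    have ubT: "\<forall>p\<in>XT. lex_le p (snd (Rep_ll u))"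
    proof
      fix p assume "p \<in> XT"
      then obtain x where "x \<in> X" "Rep_ll x = (True, p)" unfolding XT_def by blast
      then have "ll_le (True, p) (Rep_ll u)" using u le_ll_Rep by metis
      then show "lex_le p (snd (Rep_ll u))" using uT by (cases "Rep_ll u") (auto simp: ll_le_iff)
    qed
    obtain s where s: "s \<in> long_ray_carrier" "\<forall>x\<in>XT. lex_le x s"
      "\<forall>z\<in>long_ray_carrier. (\<forall>x\<in>XT. lex_le x z) \<longrightarrow> lex_le s z"
      using LR_sup[OF XTne XTR Rsnd ubT] by blast
    have sC: "(True, s) \<in> long_line_carrier" using s(1) by (cases s) (auto simp: carrier_iff long_ray_carrier_def)
    define S0 where "S0 = Abs_ll (True, s)"
    have RS0: "Rep_ll S0 = (True, s)" unfolding S0_def by (rule Abs_ll_inverse[OF sC])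
    have up: "\<forall>x\<in>X. x \<le> S0"
    proof
      fix x assume x: "x \<in> X"
      show "x \<le> S0"
      proof (cases "fst (Rep_ll x)")
        case True
        then obtain p where p: "Rep_ll x = (True, p)" by (cases "Rep_ll x") auto
        then have "p \<in> XT" unfolding XT_def using x by blast
        then have "lex_le p s" using s(2) by blast
        then show ?thesis unfolding le_ll_Rep RS0 p by (simp add: ll_le_iff)
      next
        case False
        then obtain p where p: "Rep_ll x = (False, p)" by (cases "Rep_ll x") auto
        then show ?thesis unfolding le_ll_Rep RS0 p by (simp add: ll_le_iff)
      qed
    qed
    have least: "\<forall>z. (\<forall>x\<in>X. x \<le> z) \<longrightarrow> S0 \<le> z"
    proof (intro allI impI)
      fix z assume z: "\<forall>x\<in>X. x \<le> z"
      have "ll_le (Rep_ll x0) (Rep_ll z)" using z x0 le_ll_Rep by blast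
      then have zT: "fst (Rep_ll z) = True" using x0(2)
        by (cases "Rep_ll x0"; cases "Rep_ll z") (auto simp: ll_le_iff split: if_splits)
      then obtain t where t: "Rep_ll z = (True, t)" by (cases "Rep_ll z") auto
      have tR: "t \<in> long_ray_carrier" using Rsnd[of z] t by simp
      have "\<forall>p\<in>XT. lex_le p t"
      proof
        fix p assume "p \<in> XT"
        then obtain x where "x \<in> X" "Rep_ll x = (True, p)" unfolding XT_def by blast
        then have "ll_le (True, p) (Rep_ll z)" using z le_ll_Rep by metis
        then show "lex_le p t" using t by (simp add: ll_le_iff)
      qed
      then have "lex_le s t" using s(3) tR by blast
      then show "S0 \<le> z" unfolding le_ll_Rep RS0 t by (simp add: ll_le_iff)
    qed
    show ?thesis using up least by blast
  next
    case False
    then have allF: "\<And>x. x \<in> X \<Longrightarrow> fst (Rep_ll x) = False" by auto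
    define XF where "XF = {p. \<exists>x\<in>X. Rep_ll x = (False, p)}"
    obtain x0 where x0: "x0 \<in> X" using ne by blast
    have XFne: "XF \<noteq> {}" unfolding XF_def using x0 allF[OF x0] by (cases "Rep_ll x0") auto
    have XFR: "XF \<subseteq> long_ray_carrier"
    proof
      fix p assume "p \<in> XF"
      then obtain x where "Rep_ll x = (False, p)" unfolding XF_def by blast
      then show "p \<in> long_ray_carrier" using Rsnd[of x] by simp
    qed
    obtain g where g: "g \<in> long_ray_carrier" "\<forall>x\<in>XF. lex_le g x" "\<forall>z. (\<forall>x\<in>XF. lex_le z x) \<longrightarrow> lex_le z g"
      using LR_inf[OF XFne XFR] by blast
    have repF: "\<exists>p. Rep_ll x = (False, p) \<and> p \<in> XF" if "x \<in> X" for x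
      using allF[OF that] that unfolding XF_def by (cases "Rep_ll x") auto
    show ?thesis
    proof (cases "g = (wbot, 0)")
      case False
      have gC: "(False, g) \<in> long_line_carrier" using g(1) False by (cases g) (auto simp: carrier_iff long_ray_carrier_def)
      define S0 where "S0 = Abs_ll (False, g)"
      have RS0: "Rep_ll S0 = (False, g)" unfolding S0_def by (rule Abs_ll_inverse[OF gC])
      have up: "\<forall>x\<in>X. x \<le> S0"
      proof
        fix x assume x: "x \<in> X"
        obtain p where p: "Rep_ll x = (False, p)" "p \<in> XF" using repF[OF x] by blast
        then have "lex_le g p" using g(2) by blast
        then show "x \<le> S0" unfolding le_ll_Rep RS0 p(1) by (simp add: ll_le_iff)
      qed
      have least: "\<forall>z. (\<forall>x\<in>X. x \<le> z) \<longrightarrow> S0 \<le> z"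
      proof (intro allI impI)
        fix z assume z: "\<forall>x\<in>X. x \<le> z"
        show "S0 \<le> z"
        proof (cases "fst (Rep_ll z)")
          case True
          then obtain t where t: "Rep_ll z = (True, t)" by (cases "Rep_ll z") auto
          show ?thesis unfolding le_ll_Rep RS0 t by (simp add: ll_le_iff)
        next
          case False
          then obtain t where t: "Rep_ll z = (False, t)" by (cases "Rep_ll z") auto
          have "\<forall>p\<in>XF. lex_le t p"
          proof
            fix p assume "p \<in> XF"
            then obtain x where "x \<in> X" "Rep_ll x = (False, p)" unfolding XF_def by blast
            then have "ll_le (False, p) (Rep_ll z)" using z le_ll_Rep by metis
            then show "lex_le t p" using t by (simp add: ll_le_iff)
          qed
          then have "lex_le t g" using g(3) by blast
          then show ?thesis unfolding le_ll_Rep RS0 t by (simp add: ll_le_iff)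
        qed
      qed
      show ?thesis using up least by blast
    next
      case True
      have gC: "(True, wbot::'w, 0) \<in> long_line_carrier" by (simp add: carrier_iff)
      define S0 where "S0 = Abs_ll (True, wbot::'w, 0)"
      have RS0: "Rep_ll S0 = (True, wbot::'w, 0)" unfolding S0_def by (rule Abs_ll_inverse[OF gC])
      have up: "\<forall>x\<in>X. x \<le> S0"
      proof
        fix x assume x: "x \<in> X"
        obtain p where p: "Rep_ll x = (False, p)" "p \<in> XF" using repF[OF x] by blast
        show "x \<le> S0" unfolding le_ll_Rep RS0 p(1) by (simp add: ll_le_iff)
      qed
      have least: "\<forall>z. (\<forall>x\<in>X. x \<le> z) \<longrightarrow> S0 \<le> z"
      proof (intro allI impI)
        fix z assume z: "\<forall>x\<in>X. x \<le> z"
        show "S0 \<le> z"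
        proof (cases "fst (Rep_ll z)")
          case True
          then obtain t where t: "Rep_ll z = (True, t)" by (cases "Rep_ll z") auto
          have "lex_le (wbot, 0) t"
            using Rsnd[of z] t wbot_le[of "fst t"] unfolding lex_le_iff long_ray_carrier_def
            by (cases t) (auto simp: le_less)
          then show ?thesis unfolding le_ll_Rep RS0 t by (simp add: ll_le_iff)
        next
          case False
          then obtain t where t: "Rep_ll z = (False, t)" by (cases "Rep_ll z") auto
          have "\<forall>p\<in>XF. lex_le t p"
          proof
            fix p assume "p \<in> XF"
            then obtain x where "x \<in> X" "Rep_ll x = (False, p)" unfolding XF_def by blast
            then have "ll_le (False, p) (Rep_ll z)" using z le_ll_Rep by metis
            then show "lex_le t p" using t by (simp add: ll_le_iff)
          qed
          then have "lex_le t (wbot, 0)" using g(3) True by blast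
          moreover have "t \<in> long_ray_carrier" using Rsnd[of z] t by simp
          ultimately have "t = (wbot, 0)" using wbot_le[of "fst t"] unfolding lex_le_iff long_ray_carrier_def
            by (cases t) (auto simp: not_less[symmetric])
          then have "Rep_ll z = (False, wbot, 0)" using t by simp
          then show ?thesis using Rep_ll_carrier[of z] by (simp add: carrier_iff)
        qed
      qed
      show ?thesis using up least by blast
    qed
  qed
qed

lemma ll_witness:
  assumes a: "a \<in> long_line_carrier" and b: "b \<in> long_line_carrier" and ab: "long_line_less a b"
  shows "\<exists>d\<in>long_line_carrier. long_line_less a d \<and> long_line_less d b \<and> snd (snd d) \<in> \<rat> \<and>
           (fst (snd d) = fst (snd a) \<or> fst (snd d) = fst (snd b) \<or> fst (snd d) = wbot)"
proof -
  obtain ba v s where ea: "a = (ba, v, s)" by (metis prod_cases3)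
  obtain bb v' s' where eb: "b = (bb, v', s')" by (metis prod_cases3)
  have ca: "0 \<le> s" "s < 1" "\<not> (ba = False \<and> v = wbot \<and> s = 0)" using a ea by (auto simp: carrier_iff)
  have cb: "0 \<le> s'" "s' < 1" "\<not> (bb = False \<and> v' = wbot \<and> s' = 0)" using b eb by (auto simp: carrier_iff)
  have lt: "long_line_less (ba, v, s) (bb, v', s')" using ab ea eb by simp
  show ?thesis
  proof (cases ba)
    case True
    then have bbT: "bb" and lx: "lex_less (v, s) (v', s')" using lt by (auto simp: lll_iff)
    show ?thesis
    proof (cases "v = v'")
      case True
      then have "s < s'" using lx by (simp add: lex_less_def)
      then obtain q where q: "q \<in> \<rat>" "s < q" "q < s'" using Rats_dense_in_real by blast
      have "(True, v, q) \<in> long_line_carrier" using q ca cb by (simp add: carrier_iff)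
      moreover have "long_line_less a (True, v, q)" using ea \<open>ba\<close> q by (simp add: lll_iff lex_less_def)
      moreover have "long_line_less (True, v, q) b" using eb bbT q True by (simp add: lll_iff lex_less_def)
      ultimately show ?thesis using q(1) ea by (intro bexI[of _ "(True, v, q)"]) auto
    next
      case False
      then have "v < v'" using lx by (simp add: lex_less_def)
      obtain q where q: "q \<in> \<rat>" "s < q" "q < 1" using Rats_dense_in_real ca(2) by blast
      have "(True, v, q) \<in> long_line_carrier" using q ca by (simp add: carrier_iff)
      moreover have "long_line_less a (True, v, q)" using ea \<open>ba\<close> q by (simp add: lll_iff lex_less_def)
      moreover have "long_line_less (True, v, q) b" using eb bbT \<open>v < v'\<close> by (simp add: lll_iff lex_less_def)
      ultimately show ?thesis using q(1) ea by (intro bexI[of _ "(True, v, q)"]) auto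
    qed
  next
    case False
    note baF = False
    show ?thesis
    proof (cases bb)
      case True
      show ?thesis
      proof (cases "(v', s') = (wbot, 0)")
        case False
        have "(True, wbot, 0) \<in> long_line_carrier" by (simp add: carrier_iff)
        moreover have "long_line_less a (True, wbot, 0)" using ea baF by (simp add: lll_iff)
        moreover have "lex_less (wbot, 0) (v', s')"
          using False wbot_le[of v'] cb(1) unfolding lex_less_def by (auto simp: le_less)
        then have "long_line_less (True, wbot, 0) b" using eb True by (simp add: lll_iff)
        ultimately show ?thesis by (intro bexI[of _ "(True, wbot, 0)"]) auto
      next
        case eq: True
        have bw: "v' = wbot" "s' = 0" using eq by auto
        show ?thesis
        proof (cases "v = wbot")
          case False
          then have "wbot < v" using wbot_le[of v] by (simp add: le_less)
          have "(False, wbot, 1/2) \<in> long_line_carrier" by (simp add: carrier_iff)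
          moreover have "long_line_less a (False, wbot, 1/2)" using ea baF \<open>wbot < v\<close> by (simp add: lll_iff lex_less_def)
          moreover have "long_line_less (False, wbot, 1/2) b" using eb \<open>bb\<close> by (simp add: lll_iff)
          ultimately show ?thesis by (intro bexI[of _ "(False, wbot, 1/2)"]) auto
        next
          case True
          then have "0 < s" using ca baF by auto
          then obtain q where q: "q \<in> \<rat>" "0 < q" "q < s" using Rats_dense_in_real by blast
          have "(False, wbot, q) \<in> long_line_carrier" using q ca by (simp add: carrier_iff)
          moreover have "long_line_less a (False, wbot, q)" using ea baF True q by (simp add: lll_iff lex_less_def)
          moreover have "long_line_less (False, wbot, q) b" using eb \<open>bb\<close> by (simp add: lll_iff)
          ultimately show ?thesis using q(1) by (intro bexI[of _ "(False, wbot, q)"]) auto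
        qed
      qed
    next
      case False
      note bbF = False
      then have lx: "lex_less (v', s') (v, s)" using lt baF by (simp add: lll_iff)
      show ?thesis
      proof (cases "v = v'")
        case True
        then have "s' < s" using lx by (simp add: lex_less_def)
        then obtain q where q: "q \<in> \<rat>" "s' < q" "q < s" using Rats_dense_in_real by blast
        have "(False, v, q) \<in> long_line_carrier" using q ca cb by (simp add: carrier_iff)
        moreover have "long_line_less a (False, v, q)" using ea baF q by (simp add: lll_iff lex_less_def)
        moreover have "long_line_less (False, v, q) b" using eb bbF q True by (simp add: lll_iff lex_less_def)
        ultimately show ?thesis using q(1) ea by (intro bexI[of _ "(False, v, q)"]) auto
      next
        case False
        then have "v' < v" using lx by (simp add: lex_less_def)
        obtain q where q: "q \<in> \<rat>" "s' < q" "q < 1" using Rats_dense_in_real cb(2) by blast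
        have "(False, v', q) \<in> long_line_carrier" using q cb by (simp add: carrier_iff)
        moreover have "long_line_less a (False, v', q)" using ea baF \<open>v' < v\<close> by (simp add: lll_iff lex_less_def)
        moreover have "long_line_less (False, v', q) b" using eb bbF q by (simp add: lll_iff lex_less_def)
        ultimately show ?thesis using q(1) eb by (intro bexI[of _ "(False, v', q)"]) auto
      qed
    qed
  qed
qed

instantiation ll :: (wellorder) conditionally_complete_linorder
begin
definition Sup_ll :: "'a ll set \<Rightarrow> 'a ll" where
  "Sup_ll X = (SOME s. (\<forall>x\<in>X. x \<le> s) \<and> (\<forall>z. (\<forall>x\<in>X. x \<le> z) \<longrightarrow> s \<le> z))"
definition Inf_ll :: "'a ll set \<Rightarrow> 'a ll" where
  "Inf_ll X = Sup {y. \<forall>x\<in>X. y \<le> x}"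

lemma Sup_ll_prop:
  fixes X :: "'a ll set"
  assumes "X \<noteq> {}" "bdd_above X"
  shows "(\<forall>x\<in>X. x \<le> Sup X) \<and> (\<forall>z. (\<forall>x\<in>X. x \<le> z) \<longrightarrow> Sup X \<le> z)"
proof -
  have "\<exists>u. \<forall>x\<in>X. x \<le> u" using assms(2) by (auto simp: bdd_above_def)
  from ll_lub[OF assms(1) this] show ?thesis unfolding Sup_ll_def by (rule someI_ex)
qed

instance
proof
  fix x z :: "'a ll" and X :: "'a ll set"
  show "x \<in> X \<Longrightarrow> bdd_above X \<Longrightarrow> x \<le> Sup X" using Sup_ll_prop by blast
  show "X \<noteq> {} \<Longrightarrow> (\<And>x. x \<in> X \<Longrightarrow> x \<le> z) \<Longrightarrow> Sup X \<le> z"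
  proof -
    assume ne: "X \<noteq> {}" and ub: "\<And>x. x \<in> X \<Longrightarrow> x \<le> z"
    have "bdd_above X" using ub by (auto simp: bdd_above_def)
    then show "Sup X \<le> z" using Sup_ll_prop[OF ne] ub by blast
  qed
  show "x \<in> X \<Longrightarrow> bdd_below X \<Longrightarrow> Inf X \<le> x"
  proof -
    assume xX: "x \<in> X" and bb: "bdd_below X"
    define L where "L = {y. \<forall>x\<in>X. y \<le> x}"
    have Lne: "L \<noteq> {}" using bb by (auto simp: bdd_below_def L_def)
    have Lb: "bdd_above L" using xX by (auto simp: bdd_above_def L_def)
    have "Sup L \<le> x" using Sup_ll_prop[OF Lne Lb] xX unfolding L_def by blast
    then show "Inf X \<le> x" unfolding Inf_ll_def L_def .
  qed
  show "X \<noteq> {} \<Longrightarrow> (\<And>x. x \<in> X \<Longrightarrow> z \<le> x) \<Longrightarrow> z \<le> Inf X"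
  proof -
    assume ne: "X \<noteq> {}" and lb: "\<And>x. x \<in> X \<Longrightarrow> z \<le> x"
    define L where "L = {y. \<forall>x\<in>X. y \<le> x}"
    have zL: "z \<in> L" using lb unfolding L_def by blast
    then have Lne: "L \<noteq> {}" by blast
    obtain x0 where "x0 \<in> X" using ne by blast
    then have Lb: "bdd_above L" by (auto simp: bdd_above_def L_def)
    have "z \<le> Sup L" using Sup_ll_prop[OF Lne Lb] zL by blast
    then show "z \<le> Inf X" unfolding Inf_ll_def L_def .
  qed
qed
end

instance ll :: (wellorder) linear_continuum
proof
  fix x y :: "'a ll"
  assume "x < y"
  then have "long_line_less (Rep_ll x) (Rep_ll y)" by (simp add: less_ll_def)
  from ll_witness[OF Rep_ll_carrier Rep_ll_carrier this] obtain d where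
    d: "d \<in> long_line_carrier" "long_line_less (Rep_ll x) d" "long_line_less d (Rep_ll y)" by blast
  have "Rep_ll (Abs_ll d) = d" using d(1) by (rule Abs_ll_inverse)
  then show "\<exists>z. x < z \<and> z < y" using d by (intro exI[of _ "Abs_ll d"]) (simp add: less_ll_def)
next
  have c1: "(True, wbot::'a, 0) \<in> long_line_carrier" by (simp add: carrier_iff)
  have c2: "(True, wbot::'a, 1/2) \<in> long_line_carrier" by (simp add: carrier_iff)
  have "Abs_ll (True, wbot::'a, 0) \<noteq> Abs_ll (True, wbot, 1/2)"
    using Abs_ll_inject[OF c1 c2] by simp
  then show "\<exists>a b::'a ll. a \<noteq> b" by blast
qed

instantiation ll :: (wellorder) linorder_topology
begin
definition open_ll :: "'a ll set \<Rightarrow> bool" where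
  "open_ll = generate_topology (range (\<lambda>a. {..< a}) \<union> range (\<lambda>a. {a <..}))"
instance by standard (rule open_ll_def)
end

instance ll :: (wellorder) linear_continuum_topology ..

lemma subtop_order:
  fixes S :: "'a::linorder_topology set"
  assumes conv: "\<And>x y z. x \<in> S \<Longrightarrow> z \<in> S \<Longrightarrow> x \<le> y \<Longrightarrow> y \<le> z \<Longrightarrow> y \<in> S"
  shows "top_of_set S = order_topology_on S (<)"
proof -
  define B where "B = insert S ({{x\<in>S. x < a} | a. a \<in> S} \<union> {{x\<in>S. a < x} | a. a \<in> S})"
  have SB: "S \<in> B" unfolding B_def by simp
  have lt: "generate_topology_on B (S \<inter> {..<a})" for a
  proof (cases "a \<in> S")
    case True
    have "S \<inter> {..<a} = {x\<in>S. x < a}" by auto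
    moreover have "{x\<in>S. x < a} \<in> B" unfolding B_def using True by blast
    ultimately show ?thesis by (simp add: generate_topology_on.Basis)
  next
    case False
    show ?thesis
    proof (cases "\<forall>x\<in>S. x < a")
      case True
      then have "S \<inter> {..<a} = S" by auto
      then show ?thesis using SB by (simp add: generate_topology_on.Basis)
    next
      case nall: False
      then obtain x where x: "x \<in> S" "a \<le> x" by (auto simp: not_less)
      have "S \<inter> {..<a} = {}"
      proof (rule ccontr)
        assume "S \<inter> {..<a} \<noteq> {}"
        then obtain y where y: "y \<in> S" "y < a" by auto
        have "a \<in> S" using conv[OF y(1) x(1) less_imp_le[OF y(2)] x(2)] .
        then show False using False by simp
      qed
      then show ?thesis by (simp add: generate_topology_on.Empty)
    qed
  qed
  have gt: "generate_topology_on B (S \<inter> {a<..})" for a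
  proof (cases "a \<in> S")
    case True
    have "S \<inter> {a<..} = {x\<in>S. a < x}" by auto
    moreover have "{x\<in>S. a < x} \<in> B" unfolding B_def using True by blast
    ultimately show ?thesis by (simp add: generate_topology_on.Basis)
  next
    case False
    show ?thesis
    proof (cases "\<forall>x\<in>S. a < x")
      case True
      then have "S \<inter> {a<..} = S" by auto
      then show ?thesis using SB by (simp add: generate_topology_on.Basis)
    next
      case nall: False
      then obtain x where x: "x \<in> S" "x \<le> a" by (auto simp: not_less)
      have "S \<inter> {a<..} = {}"
      proof (rule ccontr)
        assume "S \<inter> {a<..} \<noteq> {}"
        then obtain y where y: "y \<in> S" "a < y" by auto
        have "a \<in> S" using conv[OF x(1) y(1) x(2) less_imp_le[OF y(2)]] .
        then show False using False by simp
      qed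
      then show ?thesis by (simp add: generate_topology_on.Empty)
    qed
  qed
  have fwd: "generate_topology_on B (S \<inter> V)" if "generate_topology (range (\<lambda>a. {..< a}) \<union> range (\<lambda>a. {a <..})) V" for V
    using that
  proof (induction rule: generate_topology.induct)
    case UNIV
    then show ?case using SB by (simp add: generate_topology_on.Basis)
  next
    case (Int a b)
    have "S \<inter> (a \<inter> b) = (S \<inter> a) \<inter> (S \<inter> b)" by auto
    then show ?case using Int by (simp add: generate_topology_on.Int)
  next
    case (UN K)
    have e: "S \<inter> \<Union>K = \<Union>((\<lambda>k. S \<inter> k) ` K)" by auto
    have "generate_topology_on B (\<Union>((\<lambda>k. S \<inter> k) ` K))"
    proof (rule generate_topology_on.UN)
      fix k assume "k \<in> (\<lambda>k. S \<inter> k) ` K"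
      then obtain k0 where "k0 \<in> K" "k = S \<inter> k0" by auto
      then show "generate_topology_on B k" using UN.IH by blast
    qed
    then show ?case unfolding e .
  next
    case (Basis s)
    then consider a where "s = {..<a}" | a where "s = {a<..}" by auto
    then show ?case using lt gt by cases simp_all
  qed
  have bwd: "openin (top_of_set S) U" if "generate_topology_on B U" for U
  proof (rule generate_topology_on_coarsest[OF istopology_openin _ that])
    fix X assume "X \<in> B"
    then have "X = S \<or> (\<exists>a. X = {x\<in>S. x < a}) \<or> (\<exists>a. X = {x\<in>S. a < x})"
      unfolding B_def by auto
    then consider "X = S" | a where "X = {x\<in>S. x < a}" | a where "X = {x\<in>S. a < x}"
      by (elim disjE exE) auto
    then show "openin (top_of_set S) X"
    proof cases
      case 1 then show ?thesis by simp
    next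
      case 2
      have "X = S \<inter> {..<a}" using 2 by auto
      then show ?thesis by (auto simp: openin_open intro!: exI[of _ "{..<a}"])
    next
      case 3
      have "X = S \<inter> {a<..}" using 3 by auto
      then show ?thesis by (auto simp: openin_open intro!: exI[of _ "{a<..}"])
    qed
  qed
  have "openin (top_of_set S) U \<longleftrightarrow> openin (order_topology_on S (<)) U" for U
  proof
    assume "openin (top_of_set S) U"
    then obtain V where V: "open V" "U = S \<inter> V" by (auto simp: openin_open)
    have "generate_topology (range (\<lambda>a. {..< a}) \<union> range (\<lambda>a. {a <..})) V"
      using V(1) by (simp add: open_generated_order)
    then have "generate_topology_on B U" using fwd V(2) by simp
    then show "openin (order_topology_on S (<)) U"
      unfolding order_topology_on_def B_def[symmetric] by (simp add: openin_topology_generated_by_iff)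
  next
    assume "openin (order_topology_on S (<)) U"
    then have "generate_topology_on B U"
      unfolding order_topology_on_def B_def[symmetric] by (simp add: openin_topology_generated_by_iff)
    then show "openin (top_of_set S) U" by (rule bwd)
  qed
  then show ?thesis by (simp add: topology_eq)
qed

lemma order_iso_homeo:
  assumes inj: "inj_on g S" and img: "g ` S = S'"
    and ord: "\<And>x y. x \<in> S \<Longrightarrow> y \<in> S \<Longrightarrow> lt' (g x) (g y) \<longleftrightarrow> lt x y"
  shows "homeomorphic_map (order_topology_on S lt) (order_topology_on S' lt') g"
proof -
  define B where "B = insert S ({{x\<in>S. lt x a} | a. a \<in> S} \<union> {{x\<in>S. lt a x} | a. a \<in> S})"
  define B' where "B' = insert S' ({{x\<in>S'. lt' x a} | a. a \<in> S'} \<union> {{x\<in>S'. lt' a x} | a. a \<in> S'})"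
  have UB: "\<Union>B = S" unfolding B_def by auto
  have e1: "g ` {x\<in>S. lt x a} = {y\<in>S'. lt' y (g a)}" if aS: "a \<in> S" for a
  proof (intro equalityI subsetI)
    fix y assume "y \<in> g ` {x\<in>S. lt x a}"
    then obtain x where x: "x \<in> S" "lt x a" "y = g x" by auto
    have "lt' (g x) (g a)" using ord[OF x(1) aS] x(2) by simp
    moreover have "g x \<in> S'" using img x(1) by auto
    ultimately show "y \<in> {y\<in>S'. lt' y (g a)}" using x(3) by simp
  next
    fix y assume "y \<in> {y\<in>S'. lt' y (g a)}"
    then have y: "y \<in> S'" "lt' y (g a)" by auto
    then obtain x where x: "x \<in> S" "y = g x" using img by auto
    have "lt x a" using ord[OF x(1) aS] y(2) x(2) by simp
    then show "y \<in> g ` {x\<in>S. lt x a}" using x by auto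
  qed
  have e2: "g ` {x\<in>S. lt a x} = {y\<in>S'. lt' (g a) y}" if aS: "a \<in> S" for a
  proof (intro equalityI subsetI)
    fix y assume "y \<in> g ` {x\<in>S. lt a x}"
    then obtain x where x: "x \<in> S" "lt a x" "y = g x" by auto
    have "lt' (g a) (g x)" using ord[OF aS x(1)] x(2) by simp
    moreover have "g x \<in> S'" using img x(1) by auto
    ultimately show "y \<in> {y\<in>S'. lt' (g a) y}" using x(3) by simp
  next
    fix y assume "y \<in> {y\<in>S'. lt' (g a) y}"
    then have y: "y \<in> S'" "lt' (g a) y" by auto
    then obtain x where x: "x \<in> S" "y = g x" using img by auto
    have "lt a x" using ord[OF aS x(1)] y(2) x(2) by simp
    then show "y \<in> g ` {x\<in>S. lt a x}" using x by auto
  qed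
  have "(image g) ` B = B'"
  proof (intro equalityI subsetI)
    fix Z assume "Z \<in> (image g) ` B"
    then obtain Z0 where Z0: "Z0 \<in> B" "Z = g ` Z0" by auto
    then consider "Z0 = S" | a where "a \<in> S" "Z0 = {x\<in>S. lt x a}" | a where "a \<in> S" "Z0 = {x\<in>S. lt a x}"
      unfolding B_def by blast
    then show "Z \<in> B'"
    proof cases
      case 1 then show ?thesis using Z0(2) img unfolding B'_def by simp
    next
      case 2
      have "Z = {y\<in>S'. lt' y (g a)}" using Z0(2) 2 e1 by simp
      moreover have "g a \<in> S'" using 2(1) img by auto
      ultimately show ?thesis unfolding B'_def by blast
    next
      case 3
      have "Z = {y\<in>S'. lt' (g a) y}" using Z0(2) 3 e2 by simp
      moreover have "g a \<in> S'" using 3(1) img by auto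
      ultimately show ?thesis unfolding B'_def by blast
    qed
  next
    fix Z assume "Z \<in> B'"
    then consider "Z = S'" | b where "b \<in> S'" "Z = {x\<in>S'. lt' x b}" | b where "b \<in> S'" "Z = {x\<in>S'. lt' b x}"
      unfolding B'_def by blast
    then show "Z \<in> (image g) ` B"
    proof cases
      case 1
      have "S \<in> B" unfolding B_def by simp
      moreover have "Z = g ` S" using 1 img by simp
      ultimately show ?thesis by (rule rev_image_eqI)
    next
      case 2
      then obtain a where a: "a \<in> S" "b = g a" using img by auto
      have "{x\<in>S. lt x a} \<in> B" unfolding B_def using a(1) by blast
      moreover have "Z = g ` {x\<in>S. lt x a}" using 2 a e1 by simp
      ultimately show ?thesis by blast
    next
      case 3
      then obtain a where a: "a \<in> S" "b = g a" using img by auto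
      have "{x\<in>S. lt a x} \<in> B" unfolding B_def using a(1) by blast
      moreover have "Z = g ` {x\<in>S. lt a x}" using 3 a e2 by simp
      ultimately show ?thesis by blast
    qed
  qed
  then have "homeomorphic_map (topology_generated_by B) (topology_generated_by B') g"
    using homeomorphic_map_topology_generated_by[of g B] inj UB by simp
  then show ?thesis unfolding order_topology_on_def B_def B'_def .
qed

lemma om_countable_le:
  assumes "omega1_type TYPE('w::wellorder)"
  shows "countable {..(w::'w)}"
proof -
  have "countable {..<w}" using assms unfolding omega1_type_def by blast
  moreover have "{..w} = insert w {..<w}" by auto
  ultimately show ?thesis by simp
qed

lemma om_bound:
  assumes om: "omega1_type TYPE('w::wellorder)" and W: "countable (W::'w set)"
  shows "\<exists>m. \<forall>w\<in>W. w < m"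
proof -
  define U where "U = (\<Union>w\<in>W. {..w})"
  have "countable U" unfolding U_def using W om_countable_le[OF om] by (intro countable_UN) auto
  moreover have "uncountable (UNIV :: 'w set)" using om unfolding omega1_type_def by blast
  ultimately have "U \<noteq> UNIV" by auto
  then obtain m where m: "m \<notin> U" by auto
  have "\<forall>w\<in>W. w < m"
  proof
    fix w assume "w \<in> W"
    then have "\<not> m \<le> w" using m unfolding U_def by auto
    then show "w < m" by simp
  qed
  then show ?thesis by blast
qed

definition wll :: "'w::wellorder ll \<Rightarrow> 'w" where "wll x = fst (snd (Rep_ll x))"

lemma Rsnd: "snd (Rep_ll x) \<in> long_ray_carrier"
proof -
  obtain b p where e: "Rep_ll x = (b, p)" by (metis surj_pair)
  have "(b, p) \<in> long_line_carrier" using Rep_ll_carrier[of x] e by simp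
  then show ?thesis using e by (simp add: long_line_carrier_def)
qed

lemma Rep_Abs_T: "(r::real) \<in> {0..<1} \<Longrightarrow> Rep_ll (Abs_ll (True, w, r)) = (True, w, r)"
  by (rule Abs_ll_inverse) (simp add: carrier_iff)

lemma ll_above:
  fixes t :: "'w::wellorder ll"
  assumes "wll t < m" shows "t < Abs_ll (True, m, 0)"
proof -
  have R: "Rep_ll (Abs_ll (True, m, 0)) = (True, m, 0)" by (rule Rep_Abs_T) simp
  obtain b v r where e: "Rep_ll t = (b, v, r)" by (metis prod_cases3)
  have "v < m" using assms e unfolding wll_def by simp
  then show ?thesis unfolding less_ll_def R e by (cases b) (simp_all add: lll_iff lex_less_def)
qed

lemma ll_below:
  fixes t :: "'w::wellorder ll"
  assumes "wll t < m" shows "Abs_ll (False, m, 1/2) < t"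
proof -
  have R: "Rep_ll (Abs_ll (False, m, 1/2)) = (False, m, 1/2)" by (rule Abs_ll_inverse) (simp add: carrier_iff)
  obtain b v r where e: "Rep_ll t = (b, v, r)" by (metis prod_cases3)
  have "v < m" using assms e unfolding wll_def by simp
  then show ?thesis unfolding less_ll_def R e by (cases b) (simp_all add: lll_iff lex_less_def)
qed

lemma ll_nomax: "\<exists>y. (x::'w::wellorder ll) < y"
proof -
  obtain b v r where e: "Rep_ll x = (b, v, r)" and r: "0 \<le> r" "r < 1" using Rep_ll_cases[of x] by metis
  show ?thesis
  proof (cases b)
    case True
    have R: "Rep_ll (Abs_ll (True, v, (r+1)/2)) = (True, v, (r+1)/2)" by (rule Rep_Abs_T) (use r in simp)
    have "x < Abs_ll (True, v, (r+1)/2)" unfolding less_ll_def R e using True r by (simp add: lll_iff lex_less_def)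
    then show ?thesis by blast
  next
    case False
    have R: "Rep_ll (Abs_ll (True, wbot::'w, 0)) = (True, wbot, 0)" by (rule Rep_Abs_T) simp
    have "x < Abs_ll (True, wbot, 0)" unfolding less_ll_def R e using False by (simp add: lll_iff)
    then show ?thesis by blast
  qed
qed

lemma ll_nobot: "\<exists>y. y < (x::'w::wellorder ll)"
proof -
  obtain b v r where e: "Rep_ll x = (b, v, r)" and r: "0 \<le> r" "r < 1"
    using Rep_ll_cases[of x] by metis
  show ?thesis
  proof (cases b)
    case True
    have R: "Rep_ll (Abs_ll (False, wbot::'w, 1/2)) = (False, wbot, 1/2)"
      by (rule Abs_ll_inverse) (simp add: carrier_iff)
    have "Abs_ll (False, wbot, 1/2) < x"
      unfolding less_ll_def R e using True by (simp add: lll_iff)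
    then show ?thesis
      by blast
  next
    case False
    have R: "Rep_ll (Abs_ll (False, v, (r+1)/2)) = (False, v, (r+1)/2)"
      by (rule Abs_ll_inverse) (use r in \<open>simp add: carrier_iff\<close>)
    have "Abs_ll (False, v, (r+1)/2) < x"
      unfolding less_ll_def R e using False r by (simp add: lll_iff lex_less_def)
    then show ?thesis
      by blast
  qed
qed

instance ll :: (wellorder) no_top
  by standard (rule ll_nomax)

instance ll :: (wellorder) no_bot
  by standard (rule ll_nobot)

lemma ll_wbound:
  fixes a x b :: "'w::wellorder ll"
  assumes "a \<le> x" "x \<le> b" shows "wll x \<le> max (wll a) (wll b)"
proof -
  obtain bx p where ex: "Rep_ll x = (bx, p)" by (metis surj_pair)
  obtain ba q where ea: "Rep_ll a = (ba, q)" by (metis surj_pair)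
  obtain bb q' where eb: "Rep_ll b = (bb, q')" by (metis surj_pair)
  have la: "ll_le (ba, q) (bx, p)" and lb: "ll_le (bx, p) (bb, q')" using assms ex ea eb le_ll_Rep by metis+
  show ?thesis
  proof (cases bx)
    case True
    then have "lex_le p q'" using lb by (simp add: ll_le_iff)
    then have "fst p \<le> fst q'" unfolding lex_le_iff by auto
    then show ?thesis unfolding wll_def ex eb by (simp add: le_max_iff_disj)
  next
    case False
    then have "lex_le p q" using la by (cases ba) (simp_all add: ll_le_iff)
    then have "fst p \<le> fst q" unfolding lex_le_iff by auto
    then show ?thesis unfolding wll_def ex ea by (simp add: le_max_iff_disj)
  qed
qed

lemma ll_sep:
  assumes om: "omega1_type TYPE('w::wellorder)"
  shows "\<exists>D. countable D \<and> (\<forall>x y. a \<le> x \<longrightarrow> x < y \<longrightarrow> y \<le> b \<longrightarrow> (\<exists>d\<in>D. x < d \<and> d < (y::'w ll)))"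
proof -
  define M where "M = max (wll a) (wll b)"
  define D where "D = {x::'w ll. wll x \<le> M \<and> snd (snd (Rep_ll x)) \<in> \<rat>}"
  have "Rep_ll ` D \<subseteq> UNIV \<times> ({..M} \<times> \<rat>)"
  proof
    fix z assume "z \<in> Rep_ll ` D"
    then obtain x where x: "x \<in> D" "z = Rep_ll x" by auto
    then have "fst (snd z) \<le> M" "snd (snd z) \<in> \<rat>" unfolding D_def wll_def by auto
    then show "z \<in> UNIV \<times> ({..M} \<times> \<rat>)" by (simp add: mem_Times_iff)
  qed
  moreover have "countable (UNIV \<times> ({..M} \<times> \<rat>) :: (bool \<times> 'w \<times> real) set)"
    using om_countable_le[OF om, of M] countable_rat by (intro countable_SIGMA) auto
  ultimately have "countable (Rep_ll ` D)" by (rule countable_subset)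
  moreover have "inj_on Rep_ll D" by (meson Rep_ll_inject inj_onI)
  ultimately have cD: "countable D" by (rule countable_image_inj_on)
  have dense: "\<exists>d\<in>D. x < d \<and> d < y" if "a \<le> x" "x < y" "y \<le> b" for x y
  proof -
    have "long_line_less (Rep_ll x) (Rep_ll y)" using that(2) by (simp add: less_ll_def)
    from ll_witness[OF Rep_ll_carrier Rep_ll_carrier this] obtain d where
      d: "d \<in> long_line_carrier" "long_line_less (Rep_ll x) d" "long_line_less d (Rep_ll y)" "snd (snd d) \<in> \<rat>"
        "fst (snd d) = fst (snd (Rep_ll x)) \<or> fst (snd d) = fst (snd (Rep_ll y)) \<or> fst (snd d) = wbot"
      by blast
    have R: "Rep_ll (Abs_ll d) = d" using d(1) by (rule Abs_ll_inverse)
    have "wll x \<le> M" unfolding M_def using ll_wbound[of a x b] that by simp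
    moreover have "wll y \<le> M" unfolding M_def using ll_wbound[of a y b] that by simp
    moreover have "wbot \<le> M" by (rule wbot_le)
    ultimately have "wll (Abs_ll d) \<le> M" using d(5) unfolding wll_def R by auto
    then have "Abs_ll d \<in> D" unfolding D_def using d(4) R by simp
    moreover have "x < Abs_ll d" "Abs_ll d < y" using d(2,3) R by (simp_all add: less_ll_def)
    ultimately show ?thesis by blast
  qed
  show ?thesis using cD dense by blast
qed

lemma ll_bdd:
  assumes om: "omega1_type TYPE('w::wellorder)" and T: "countable (T :: 'w ll set)"
  shows "\<exists>m. \<forall>t\<in>T. wll t < m"
  using om_bound[OF om, of "wll ` T"] T by auto

lemma long_interval_UNIV:
  assumes om: "omega1_type TYPE('w::wellorder)"
  shows "long_interval (UNIV :: 'w ll set)"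
proof
  show "\<exists>l\<in>UNIV. \<exists>u\<in>UNIV. \<forall>t\<in>T. l \<le> t \<and> t \<le> u" if T: "countable T" for T :: "'w ll set"
  proof -
    obtain m where m: "\<forall>t\<in>T. wll t < m"
      using ll_bdd[OF om T] by blast
    have "\<forall>t\<in>T. Abs_ll (False, m, 1/2) \<le> t \<and> t \<le> Abs_ll (True, m, 0)"
      using m ll_above ll_below by (blast intro: less_imp_le)
    then show ?thesis
      by blast
  qed
  show "\<exists>D. countable D \<and> order_dense_in D a b" for a b :: "'w ll"
    using ll_sep[OF om] unfolding order_dense_in_def by blast
qed (auto intro: gt_ex)

definition cglue :: "'w::wellorder ll" where "cglue = Abs_ll (True, wbot, 0)"

lemma Rep_cglue: "Rep_ll cglue = (True, wbot, 0)"
  unfolding cglue_def by (rule Rep_Abs_T) simp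

lemma long_interval_ray:
  assumes om: "omega1_type TYPE('w::wellorder)"
  shows "long_interval {(cglue::'w ll)..}"
proof
  show "\<exists>y\<in>{cglue..}. x < y" if "x \<in> {cglue..}" for x :: "'w ll"
    using that gt_ex[of x] by (meson atLeast_iff less_imp_le order_trans)
  show "\<exists>l\<in>{cglue..}. \<exists>u\<in>{cglue..}. \<forall>t\<in>T. l \<le> t \<and> t \<le> u"
    if T: "countable T" "T \<subseteq> {(cglue::'w ll)..}" for T
  proof -
    obtain m where m: "\<forall>t\<in>T. wll t < m"
      using ll_bdd[OF om T(1)] by blast
    define u where "u = max cglue (Abs_ll (True, m, 0))"
    have "\<forall>t\<in>T. cglue \<le> t \<and> t \<le> u"
      using m ll_above T(2) unfolding u_def by (fastforce simp: le_max_iff_disj less_imp_le)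
    moreover have "u \<in> {cglue..}"
      unfolding u_def by simp
    ultimately show ?thesis
      by blast
  qed
  show "\<exists>D. countable D \<and> order_dense_in D a b" for a b :: "'w ll"
    using ll_sep[OF om] unfolding order_dense_in_def by blast
qed auto

lemma hom_line: "homeomorphic_map (top_of_set (UNIV :: 'w::wellorder ll set)) long_line Rep_ll"
proof -
  have "top_of_set (UNIV :: 'w ll set) = order_topology_on UNIV (<)" by (rule subtop_order) simp
  moreover have "homeomorphic_map (order_topology_on (UNIV :: 'w ll set) (<)) (order_topology_on long_line_carrier long_line_less) Rep_ll"
  proof (rule order_iso_homeo)
    show "inj_on Rep_ll UNIV" by (meson Rep_ll_inject inj_onI)
    show "Rep_ll ` UNIV = long_line_carrier"
    proof (intro equalityI subsetI)
      fix z assume "z \<in> Rep_ll ` UNIV" then show "z \<in> long_line_carrier" using Rep_ll_carrier by auto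
    next
      fix z assume "z \<in> long_line_carrier"
      then have "Rep_ll (Abs_ll z) = z" by (rule Abs_ll_inverse)
      then show "z \<in> Rep_ll ` UNIV" by (metis rangeI)
    qed
    show "\<And>x y. x \<in> UNIV \<Longrightarrow> y \<in> UNIV \<Longrightarrow> long_line_less (Rep_ll x) (Rep_ll y) = (x < y)"
      by (simp add: less_ll_def)
  qed
  ultimately show ?thesis unfolding long_line_def by simp
qed

lemma ge_cglue: "cglue \<le> x \<Longrightarrow> \<exists>p. Rep_ll x = (True, p)"
proof -
  assume "cglue \<le> x"
  then have "ll_le (True, wbot, 0) (Rep_ll x)" using le_ll_Rep Rep_cglue by metis
  then show ?thesis by (cases "Rep_ll x") (auto simp: ll_le_iff)
qed

lemma hom_ray: "homeomorphic_map (top_of_set {(cglue :: 'w::wellorder ll)..}) long_ray (snd \<circ> Rep_ll)"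
proof -
  have "top_of_set {(cglue :: 'w ll)..} = order_topology_on {cglue..} (<)" by (rule subtop_order) auto
  moreover have "homeomorphic_map (order_topology_on {(cglue :: 'w ll)..} (<)) (order_topology_on long_ray_carrier lex_less) (snd \<circ> Rep_ll)"
  proof (rule order_iso_homeo)
    show "inj_on (snd \<circ> Rep_ll) {(cglue :: 'w ll)..}"
    proof (rule inj_onI)
      fix x y :: "'w ll" assume x: "x \<in> {cglue..}" and y: "y \<in> {cglue..}" and e: "(snd \<circ> Rep_ll) x = (snd \<circ> Rep_ll) y"
      have "\<exists>p. Rep_ll x = (True, p)" using ge_cglue x by simp
      then obtain p where p: "Rep_ll x = (True, p)" ..
      have "\<exists>q. Rep_ll y = (True, q)" using ge_cglue y by simp
      then obtain q where q: "Rep_ll y = (True, q)" ..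
      have "Rep_ll x = Rep_ll y" using p q e by simp
      then show "x = y" by (simp add: Rep_ll_inject)
    qed
    show "(snd \<circ> Rep_ll) ` {(cglue :: 'w ll)..} = long_ray_carrier"
    proof (intro equalityI subsetI)
      fix z assume "z \<in> (snd \<circ> Rep_ll) ` {(cglue :: 'w ll)..}"
      then show "z \<in> long_ray_carrier" using Rsnd by auto
    next
      fix z :: "'w \<times> real" assume zR: "z \<in> long_ray_carrier"
      have zC: "(True, z) \<in> long_line_carrier" using zR unfolding long_line_carrier_def by auto
      have R: "Rep_ll (Abs_ll (True, z)) = (True, z)" by (rule Abs_ll_inverse[OF zC])
      have "lex_le (wbot, 0) z" using zR wbot_le[of "fst z"] unfolding lex_le_iff long_ray_carrier_def
        by (cases z) (auto simp: le_less)
      then have "cglue \<le> Abs_ll (True, z)" unfolding le_ll_Rep R Rep_cglue by (simp add: ll_le_iff)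
      then show "z \<in> (snd \<circ> Rep_ll) ` {(cglue :: 'w ll)..}" using R by (metis atLeast_iff comp_apply image_eqI snd_conv)
    qed
    show "lex_less ((snd \<circ> Rep_ll) x) ((snd \<circ> Rep_ll) y) = (x < y)" if "x \<in> {(cglue :: 'w ll)..}" "y \<in> {(cglue :: 'w ll)..}" for x y
    proof -
      have "\<exists>p. Rep_ll x = (True, p)" using ge_cglue that(1) by simp
      then obtain p where p: "Rep_ll x = (True, p)" ..
      have "\<exists>q. Rep_ll y = (True, q)" using ge_cglue that(2) by simp
      then obtain q where q: "Rep_ll y = (True, q)" ..
      show ?thesis unfolding less_ll_def using p q by (simp add: lll_iff)
    qed
  qed
  ultimately show ?thesis unfolding long_ray_def by simp
qed

theorem proposition5p1:
  assumes "omega1_type TYPE('w::wellorder)"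
  shows "countably_tight (compact_open_on (homeo_cpt (long_ray :: ('w \<times> real) topology))
                                          (long_ray :: ('w \<times> real) topology))
       \<and> countably_tight (compact_open_on (homeo_cpt (long_line :: (bool \<times> 'w \<times> real) topology))
                                          (long_line :: (bool \<times> 'w \<times> real) topology))"
proof
  interpret ray: long_interval "{(cglue :: 'w ll)..}"
    by (rule long_interval_ray[OF assms])
  show "countably_tight (compact_open_on (homeo_cpt (long_ray :: ('w \<times> real) topology)) long_ray)"
    by (rule countably_tight_compact_open_homeomorphic[OF hom_ray ray.countably_tight_CO])
next
  interpret line: long_interval "UNIV :: 'w ll set"
    by (rule long_interval_UNIV[OF assms])
  show "countably_tight (compact_open_on (homeo_cpt (long_line :: (bool \<times> 'w \<times> real) topology)) long_line)"
    by (rule countably_tight_compact_open_homeomorphic[OF hom_line line.countably_tight_CO])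
qed

end
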